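(* Let $d\ge2$, $n\ge1$ and let $H=(H_1,\dots,H_n):\mathbb{C}^n\to\mathbb{C}^n$ with $H_i(X)=\sum_{|\alpha|=d}\frac{H_{i,\alpha}}{\alpha!}X^\alpha$ for complex coefficients $H_{i,\alpha}$. Suppose the Jacobian matrix $JH$ satisfies $(JH)^p=0$ for some integer $1\le p\le n$. Then for every $k\ge1$, every $i\in[n]$, every $\alpha\in\mathbb{Z}^n_{\ge0}$ with $|\alpha|=(d-1)k+1$, and every length-$p$ shuffle class $\mathcal{S}$ in $\mathcal{C}_k^{(d)}$, $$\sum_{T\in\mathcal{S}}E_{i,\alpha,H}(T)=0.$$
   Context: A $d$-Catalan tree is a rooted planar tree in which each vertex has $0$ or $d$ children; $\mathcal{C}_k^{(d)}$ is the set of those with $k$ internal vertices (hence $(d-1)k+1$ leaves). For a path $(v_0,\dots,v_p)$ in $T$ ($v_i$ a child of $v_{i-1}$), the siblings of $v_1,\dots,v_p$ subtend $(d-1)p$ subtrees; the shuffle class $\mathrm{Sh}(T;v_0,\dots,v_p)\subseteq\mathcal{C}_k^{(d)}$ consists of all trees obtained from $T$ by rearranging these subtrees among the sibling positions, all else fixed; a length-$p$ shuffle class is any set of this form. A labelling of $T=(V,E)$ is a function $\tau:V\to[n]$; it is an $(i,\alpha)$ labelling if the root has type $i$ and exactly $\alpha_\ell$ leaves have type $\ell$ for each $\ell$. For an internal vertex $v$, $\mu(v)\in\mathbb{Z}^n_{\ge0}$ counts its children of each type. The $H$-weight of a labelling $\mathcal{T}=(T,\tau)$ is $\mathcal{E}_H(\mathcal{T})=\prod_{v\text{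 internal}}H_{\tau(v),\mu(v)}$, and $E_{i,\alpha,H}(T):=\sum_{(i,\alpha)\text{ labellings }\mathcal{T}\text{ of }T}\mathcal{E}_H(\mathcal{T})$. $(JH)_{i,j}=\partial H_i/\partial X_j$. *)

theory Defs
  imports "HOL-Analysis.Analysis"
begin

text \<open>A rooted planar tree is encoded by its set of vertex addresses: the root is [],
  and the c-th child (0-based) of vertex v is v @ [c].\<close>

definition dcatalan_tree :: "nat \<Rightarrow> nat list set \<Rightarrow> bool" where
  "dcatalan_tree d T \<longleftrightarrow> finite T \<and> [] \<in> T \<and>
     (\<forall>v c. v @ [c] \<in> T \<longrightarrow> v \<in> T) \<and>
     (\<forall>v\<in>T. (\<forall>c. v @ [c] \<notin> T) \<or> (\<forall>c. v @ [c] \<in> T \<longleftrightarrow> c < d))"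

definition internal_vertices :: "nat list set \<Rightarrow> nat list set" where
  "internal_vertices T = {v \<in> T. \<exists>c. v @ [c] \<in> T}"

definition leaves :: "nat list set \<Rightarrow> nat list set" where
  "leaves T = {v \<in> T. \<forall>c. v @ [c] \<notin> T}"

definition catalan_set :: "nat \<Rightarrow> nat \<Rightarrow> nat list set set" where
  "catalan_set d k = {T. dcatalan_tree d T \<and> card (internal_vertices T) = k}"

definition subtree_at :: "nat list set \<Rightarrow> nat list \<Rightarrow> nat list set" where
  "subtree_at T v = {w. v @ w \<in> T}"

text \<open>Path (v_0,...,v_p) given by v_0 and the child indices cs, v_i = v_0 @ take i cs.
  Sibling positions of v_1,...,v_p.\<close>
definition sibling_positions :: "nat \<Rightarrow> nat list \<Rightarrow> nat list \<Rightarrow> nat list set" where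
  "sibling_positions d v0 cs =
     {v0 @ take i cs @ [c] | i c. i < length cs \<and> c < d \<and> c \<noteq> cs ! i}"

text \<open>Shuffle class Sh(T; v_0,...,v_p): rearrange the subtrees at the sibling positions
  (sigma q is the original position whose subtree is moved to position q).\<close>
definition shuffle_class :: "nat \<Rightarrow> nat list set \<Rightarrow> nat list \<Rightarrow> nat list \<Rightarrow> nat list set set" where
  "shuffle_class d T v0 cs =
     (let P = sibling_positions d v0 cs in
      {T'. \<exists>\<sigma>. bij_betw \<sigma> P P \<and>
         T' = {w \<in> T. \<not> (\<exists>q\<in>P. (\<exists>u. w = q @ u))} \<union> (\<Union>q\<in>P. (\<lambda>w. q @ w) ` subtree_at T (\<sigma> q))})"

definition is_shuffle_class :: "nat \<Rightarrow> nat \<Rightarrow> nat \<Rightarrow> nat list set set \<Rightarrow> bool" where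
  "is_shuffle_class d k p S \<longleftrightarrow>
     (\<exists>T v0 cs. T \<in> catalan_set d k \<and> length cs = p \<and> v0 @ cs \<in> T \<and>
        S = shuffle_class d T v0 cs)"

definition child_type_count :: "nat list set \<Rightarrow> (nat list \<Rightarrow> 'n) \<Rightarrow> nat list \<Rightarrow> 'n \<Rightarrow> nat" where
  "child_type_count T \<tau> v = (\<lambda>j. card {c. v @ [c] \<in> T \<and> \<tau> (v @ [c]) = j})"

definition is_labelling :: "nat list set \<Rightarrow> 'n \<Rightarrow> ('n \<Rightarrow> nat) \<Rightarrow> (nat list \<Rightarrow> 'n) \<Rightarrow> bool" where
  "is_labelling T i \<alpha> \<tau> \<longleftrightarrow> \<tau> [] = i \<and> (\<forall>j. card {v \<in> leaves T. \<tau> v = j} = \<alpha> j)"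

definition E_weight :: "('n::finite \<Rightarrow> ('n \<Rightarrow> nat) \<Rightarrow> complex) \<Rightarrow> 'n \<Rightarrow> ('n \<Rightarrow> nat)
    \<Rightarrow> nat list set \<Rightarrow> complex" where
  "E_weight Hc i \<alpha> T =
     (\<Sum>\<tau> \<in> {\<tau> \<in> T \<rightarrow>\<^sub>E (UNIV :: 'n set). is_labelling T i \<alpha> \<tau>}.
        \<Prod>v \<in> internal_vertices T. Hc (\<tau> v) (child_type_count T \<tau> v))"

definition multi_indices :: "nat \<Rightarrow> ('n::finite \<Rightarrow> nat) set" where
  "multi_indices d = {\<alpha>. sum \<alpha> UNIV = d}"

definition Hmap :: "nat \<Rightarrow> ('n::finite \<Rightarrow> ('n \<Rightarrow> nat) \<Rightarrow> complex) \<Rightarrow> 'n \<Rightarrow> ('n \<Rightarrow> complex) \<Rightarrow> complex" where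
  "Hmap d Hc i x = (\<Sum>\<alpha> \<in> multi_indices d.
      Hc i \<alpha> / of_nat (\<Prod>j\<in>UNIV. fact (\<alpha> j)) * (\<Prod>j\<in>UNIV. x j ^ \<alpha> j))"

definition jacobian :: "nat \<Rightarrow> ('n::finite \<Rightarrow> ('n \<Rightarrow> nat) \<Rightarrow> complex) \<Rightarrow> ('n \<Rightarrow> complex) \<Rightarrow> complex^'n^'n" where
  "jacobian d Hc x = (\<chi> i j. deriv (\<lambda>t. Hmap d Hc i (x(j := t))) (x j))"

definition matpow :: "'a::comm_ring_1^'n^'n \<Rightarrow> nat \<Rightarrow> 'a^'n^'n" where
  "matpow A p = ((\<lambda>B. B ** A) ^^ p) (mat 1)"

end

theory Submission
  imports Defs "HOL-Computational_Algebra.Polynomial" "HOL-Combinatorics.Permutations"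
begin

text \<open>
  The trees of the shuffle class are obtained from T by permuting, with permutations \<sigma>, the
  subtrees at the (d-1)p sibling positions of the path v_0, ..., v_p; each tree arises from
  equally many \<sigma> (a stabiliser), so it suffices that the sum of the weights over all \<sigma>
  vanishes. Pulling labellings of a shuffled tree back to T, the vertices off the path keep their
  factors, while v_i contributes H at its own type and at the types of the siblings it receives
  together with the type of v_(i+1). Summing over \<sigma> and over the types of v_1, ..., v_(p-1)
  then yields, for each multiset \<gamma> of sibling types, the coefficient of x^\<gamma> in the entry of
  ((d-1)! JH(x))^p indexed by the types of v_0 and v_p, as one sees by expanding every entry of JH
  with the multinomial theorem. Since (JH)^p vanishes identically, all these coefficients vanish.
\<close>

section \<open>Monomials and the Jacobian of H\<close>

definition monomial :: "('n::finite \<Rightarrow> 'a::comm_semiring_1) \<Rightarrow> ('n \<Rightarrow> nat) \<Rightarrow> 'a" where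
  "monomial x \<beta> = (\<Prod>j\<in>UNIV. x j ^ \<beta> j)"

definition multi_fact :: "('n::finite \<Rightarrow> nat) \<Rightarrow> nat" where
  "multi_fact \<beta> = (\<Prod>j\<in>UNIV. fact (\<beta> j))"

abbreviation incr_at :: "('n \<Rightarrow> nat) \<Rightarrow> 'n \<Rightarrow> 'n \<Rightarrow> nat" where
  "incr_at \<beta> j \<equiv> \<beta>(j := Suc (\<beta> j))"

lemma finite_multi_indices: "finite (multi_indices d :: ('n::finite \<Rightarrow> nat) set)"
proof (rule finite_subset)
  show "multi_indices d \<subseteq> (UNIV::'n set) \<rightarrow>\<^sub>E {..d}"
  proof
    fix \<alpha> :: "'n \<Rightarrow> nat" assume "\<alpha> \<in> multi_indices d"
    then have "\<alpha> j \<le> d" for j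
      using member_le_sum[of j UNIV \<alpha>] by (simp add: multi_indices_def)
    then show "\<alpha> \<in> UNIV \<rightarrow>\<^sub>E {..d}" by auto
  qed
qed (simp add: finite_PiE)

lemma multi_indices_0: "multi_indices 0 = {\<lambda>_. 0}"
  by (auto simp: multi_indices_def fun_eq_iff)

lemma sum_incr_at: "sum (incr_at \<beta> j) (UNIV::'n::finite set) = Suc (sum \<beta> UNIV)"
  using sum.remove[of UNIV j "incr_at \<beta> j"] sum.remove[of UNIV j \<beta>] by simp

lemma multi_fact_incr_at: "multi_fact (incr_at \<beta> j) = Suc (\<beta> j) * multi_fact \<beta>"
proof -
  have "multi_fact (incr_at \<beta> j) = fact (Suc (\<beta> j)) * (\<Prod>i\<in>UNIV-{j}. fact (\<beta> i))"
    using prod.remove[of UNIV j "\<lambda>i. fact (incr_at \<beta> j i)"] by (simp add: multi_fact_def del: fact_Suc)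
  moreover have "multi_fact \<beta> = fact (\<beta> j) * (\<Prod>i\<in>UNIV-{j}. fact (\<beta> i))"
    using prod.remove[of UNIV j "\<lambda>i. fact (\<beta> i)"] by (simp add: multi_fact_def)
  ultimately show ?thesis
    by (simp only: fact_Suc of_nat_id mult.assoc)
qed

lemma monomial_fun_upd: "monomial (x(j := t)) \<beta> = t ^ \<beta> j * monomial (x(j := 1)) \<beta>"
  using prod.remove[of UNIV j "\<lambda>i. (x(j := t)) i ^ \<beta> i"] prod.remove[of UNIV j "\<lambda>i. (x(j := 1)) i ^ \<beta> i"]
  by (simp add: monomial_def)

lemma monomial_split: "monomial x \<beta> = x j ^ \<beta> j * monomial (x(j := 1)) \<beta>"
  using monomial_fun_upd[of x j "x j" \<beta>] by simp

lemma monomial_one_upd: "monomial (x(j := 1)) (\<beta>(j := m)) = monomial (x(j := 1)) \<beta>"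
  unfolding monomial_def by (rule prod.cong) auto

lemma monomial_incr_at: "monomial x (incr_at \<beta> j) = x j * monomial x \<beta>"
  using monomial_split[of x "incr_at \<beta> j" j] monomial_split[of x \<beta> j] by (simp add: monomial_one_upd mult.assoc)

lemma sum_multi_indices_incr_at:
  fixes f :: "('n::finite \<Rightarrow> nat) \<Rightarrow> 'a::semiring_1"
  shows "(\<Sum>\<beta>\<in>multi_indices m. of_nat (Suc (\<beta> j)) * f (incr_at \<beta> j)) =
         (\<Sum>\<alpha>\<in>multi_indices (Suc m). of_nat (\<alpha> j) * f \<alpha>)"
proof -
  have "(\<Sum>\<alpha>\<in>multi_indices (Suc m). of_nat (\<alpha> j) * f \<alpha>) =
        (\<Sum>\<alpha>\<in>{\<alpha>\<in>multi_indices (Suc m). 0 < \<alpha> j}. of_nat (\<alpha> j) * f \<alpha>)"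
    by (rule sum.mono_neutral_right) (auto simp: finite_multi_indices)
  also have "\<dots> = (\<Sum>\<beta>\<in>multi_indices m. of_nat (Suc (\<beta> j)) * f (incr_at \<beta> j))"
  proof (rule sum.reindex_bij_witness[of _ "\<lambda>\<beta>. incr_at \<beta> j" "\<lambda>\<alpha>. \<alpha>(j := \<alpha> j - 1)"])
    fix \<alpha> assume "\<alpha> \<in> {\<alpha>\<in>multi_indices (Suc m). 0 < \<alpha> j}"
    moreover have "sum \<alpha> UNIV = Suc (sum (\<alpha>(j := \<alpha> j - 1)) UNIV)" if "0 < \<alpha> j"
      using sum_incr_at[of "\<alpha>(j := \<alpha> j - 1)" j] that by simp
    ultimately show "incr_at (\<alpha>(j := \<alpha> j - 1)) j = \<alpha>" "\<alpha>(j := \<alpha> j - 1) \<in> multi_indices m"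
      by (auto simp: multi_indices_def)
  qed (auto simp: multi_indices_def sum_incr_at[unfolded fun_upd_def])
  finally show ?thesis ..
qed

lemma Hmap_eq_sum_monomials:
  "Hmap d Hc a x = (\<Sum>\<alpha>\<in>multi_indices d. Hc a \<alpha> / of_nat (multi_fact \<alpha>) * monomial x \<alpha>)"
  by (simp add: Hmap_def multi_fact_def monomial_def)

lemma jacobian_eq_sum_derivatives:
  "jacobian d Hc x $ a $ b = (\<Sum>\<alpha>\<in>multi_indices d.
      Hc a \<alpha> / of_nat (multi_fact \<alpha>) * (of_nat (\<alpha> b) * x b ^ (\<alpha> b - 1) * monomial (x(b := 1)) \<alpha>))"
proof -
  have power: "((\<lambda>t. t ^ k) has_field_derivative of_nat k * y ^ (k - 1)) (at y)" for k and y :: complex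
    using DERIV_power[OF DERIV_ident, of k y] by simp
  have expand: "Hmap d Hc a (x(b := t)) = (\<Sum>\<alpha>\<in>multi_indices d.
      Hc a \<alpha> / of_nat (multi_fact \<alpha>) * (t ^ \<alpha> b * monomial (x(b := 1)) \<alpha>))" for t
    unfolding Hmap_eq_sum_monomials by (rule sum.cong[OF refl], subst monomial_fun_upd, rule refl)
  have "((\<lambda>t. Hmap d Hc a (x(b := t))) has_field_derivative (\<Sum>\<alpha>\<in>multi_indices d.
      Hc a \<alpha> / of_nat (multi_fact \<alpha>) * (of_nat (\<alpha> b) * x b ^ (\<alpha> b - 1) * monomial (x(b := 1)) \<alpha>))) (at (x b))"
    unfolding expand by (rule DERIV_sum, rule DERIV_cmult, rule DERIV_cmult_right, rule power)
  then show ?thesis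
    unfolding jacobian_def by (simp add: DERIV_imp_deriv)
qed

lemma jacobian_eq_sum_multi_indices:
  assumes "d \<ge> 1"
  shows "jacobian d Hc x $ a $ b =
    (\<Sum>\<beta>\<in>multi_indices (d - 1). Hc a (incr_at \<beta> b) / of_nat (multi_fact \<beta>) * monomial x \<beta>)"
proof -
  define f where "f \<alpha> = Hc a \<alpha> / of_nat (multi_fact \<alpha>) * (x b ^ (\<alpha> b - 1) * monomial (x(b := 1)) \<alpha>)"
    for \<alpha>
  have "jacobian d Hc x $ a $ b = (\<Sum>\<alpha>\<in>multi_indices (Suc (d - 1)). of_nat (\<alpha> b) * f \<alpha>)"
    using assms by (simp add: jacobian_eq_sum_derivatives f_def mult_ac)
  also have "\<dots> = (\<Sum>\<beta>\<in>multi_indices (d - 1). of_nat (Suc (\<beta> b)) * f (incr_at \<beta> b))"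
    by (rule sum_multi_indices_incr_at[symmetric])
  also have "\<dots> = (\<Sum>\<beta>\<in>multi_indices (d - 1). Hc a (incr_at \<beta> b) / of_nat (multi_fact \<beta>) * monomial x \<beta>)"
  proof (rule sum.cong[OF refl])
    fix \<beta> :: "'a \<Rightarrow> nat"
    have "(of_nat (Suc (\<beta> b)) :: complex) \<noteq> 0"
      by (rule of_nat_neq_0)
    moreover have "of_nat (multi_fact (incr_at \<beta> b)) = (of_nat (Suc (\<beta> b)) * of_nat (multi_fact \<beta>) :: complex)"
      by (simp only: multi_fact_incr_at of_nat_mult)
    then have "f (incr_at \<beta> b) =
        Hc a (incr_at \<beta> b) / (of_nat (Suc (\<beta> b)) * of_nat (multi_fact \<beta>)) * monomial x \<beta>"
      by (simp add: f_def monomial_one_upd monomial_split[of x \<beta> b] mult_ac del: of_nat_Suc)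
    ultimately show "of_nat (Suc (\<beta> b)) * f (incr_at \<beta> b) =
        Hc a (incr_at \<beta> b) / of_nat (multi_fact \<beta>) * monomial x \<beta>"
      by simp
  qed
  finally show ?thesis .
qed

section \<open>Labellings of children and the multinomial expansion\<close>

definition label_count :: "'a set \<Rightarrow> ('a \<Rightarrow> 'n) \<Rightarrow> 'n \<Rightarrow> nat" where
  "label_count C h j = card {c\<in>C. h c = j}"

lemma sum_PiE_insert:
  assumes "x \<notin> S"
  shows "(\<Sum>h\<in>Pi\<^sub>E (insert x S) T. F h) = (\<Sum>y\<in>T x. \<Sum>g\<in>Pi\<^sub>E S T. F (g(x := y)))"
proof -
  have "(\<Sum>h\<in>Pi\<^sub>E (insert x S) T. F h) = (\<Sum>(y, g)\<in>T x \<times> Pi\<^sub>E S T. F (g(x := y)))"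
    unfolding PiE_insert_eq by (subst sum.reindex[OF inj_combinator[OF assms]]) (simp add: case_prod_unfold)
  then show ?thesis
    by (simp add: sum.cartesian_product)
qed

lemma label_count_insert:
  assumes "c \<notin> C" "finite C"
  shows "label_count (insert c C) (g(c := j)) = incr_at (label_count C g) j"
proof
  fix i
  have "{c'\<in>insert c C. (g(c := j)) c' = i} =
        (if j = i then insert c {c'\<in>C. g c' = i} else {c'\<in>C. g c' = i})"
    using assms(1) by auto
  then show "label_count (insert c C) (g(c := j)) i = incr_at (label_count C g) j i"
    using assms by (simp add: label_count_def)
qed

lemma sum_labellings_eq_multinomial:
  fixes x :: "'n::finite \<Rightarrow> 'a::field_char_0"
  assumes "finite C"
  shows "(\<Sum>h\<in>C \<rightarrow>\<^sub>E UNIV. G (label_count C h) * (\<Prod>c\<in>C. x (h c))) =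
         fact (card C) * (\<Sum>\<beta>\<in>multi_indices (card C). G \<beta> / of_nat (multi_fact \<beta>) * monomial x \<beta>)"
  using assms
proof (induction C arbitrary: G rule: finite_induct)
  case empty
  then show ?case
    by (simp add: multi_indices_0 label_count_def multi_fact_def monomial_def)
next
  case (insert c C)
  define m where "m = card C"
  define F where "F \<alpha> = G \<alpha> / of_nat (multi_fact \<alpha>) * monomial x \<alpha>" for \<alpha>
  have incr_term: "x j * (G (incr_at \<beta> j) / of_nat (multi_fact \<beta>) * monomial x \<beta>) =
      of_nat (Suc (\<beta> j)) * F (incr_at \<beta> j)" for j \<beta>
  proof -
    have "(of_nat (Suc (\<beta> j)) :: 'a) \<noteq> 0"
      by (rule of_nat_neq_0)
    moreover have "of_nat (multi_fact (incr_at \<beta> j)) = (of_nat (Suc (\<beta> j)) * of_nat (multi_fact \<beta>) :: 'a)"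
      by (simp only: multi_fact_incr_at of_nat_mult)
    ultimately show ?thesis
      by (simp add: F_def monomial_incr_at del: of_nat_Suc)
  qed
  have "(\<Sum>h\<in>insert c C \<rightarrow>\<^sub>E UNIV. G (label_count (insert c C) h) * (\<Prod>c'\<in>insert c C. x (h c'))) =
      (\<Sum>j\<in>UNIV. \<Sum>g\<in>C \<rightarrow>\<^sub>E UNIV.
        G (label_count (insert c C) (g(c := j))) * (\<Prod>c'\<in>insert c C. x ((g(c := j)) c')))"
    by (rule sum_PiE_insert) (rule insert.hyps)
  also have "\<dots> = (\<Sum>j\<in>UNIV. \<Sum>g\<in>C \<rightarrow>\<^sub>E UNIV.
      x j * (G (incr_at (label_count C g) j) * (\<Prod>c'\<in>C. x (g c'))))"
  proof (intro sum.cong refl)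
    fix j g
    have "(\<Prod>c'\<in>C. x ((g(c := j)) c')) = (\<Prod>c'\<in>C. x (g c'))"
      using insert.hyps(2) by (intro prod.cong) auto
    then show "G (label_count (insert c C) (g(c := j))) * (\<Prod>c'\<in>insert c C. x ((g(c := j)) c')) =
        x j * (G (incr_at (label_count C g) j) * (\<Prod>c'\<in>C. x (g c')))"
      by (simp add: insert.hyps label_count_insert)
  qed
  also have "\<dots> = (\<Sum>j\<in>UNIV. fact m *
      (\<Sum>\<beta>\<in>multi_indices m. x j * (G (incr_at \<beta> j) / of_nat (multi_fact \<beta>) * monomial x \<beta>)))"
  proof (intro sum.cong refl)
    fix j
    show "(\<Sum>g\<in>C \<rightarrow>\<^sub>E UNIV. x j * (G (incr_at (label_count C g) j) * (\<Prod>c'\<in>C. x (g c')))) =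
        fact m * (\<Sum>\<beta>\<in>multi_indices m. x j * (G (incr_at \<beta> j) / of_nat (multi_fact \<beta>) * monomial x \<beta>))"
      unfolding sum_distrib_left[symmetric] insert.IH[of "\<lambda>\<beta>. G (incr_at \<beta> j)"] m_def
      by (simp add: sum_distrib_left ac_simps)
  qed
  also have "\<dots> = fact m * (\<Sum>j\<in>UNIV. \<Sum>\<beta>\<in>multi_indices m. of_nat (Suc (\<beta> j)) * F (incr_at \<beta> j))"
    by (simp only: incr_term sum_distrib_left)
  also have "\<dots> = fact m * (\<Sum>\<alpha>\<in>multi_indices (Suc m). of_nat (sum \<alpha> UNIV) * F \<alpha>)"
    by (simp only: sum_multi_indices_incr_at sum.swap[of _ UNIV] of_nat_sum sum_distrib_right)
  also have "\<dots> = fact m * (of_nat (Suc m) * (\<Sum>\<alpha>\<in>multi_indices (Suc m). F \<alpha>))"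
    by (simp add: multi_indices_def sum_distrib_left del: of_nat_Suc)
  also have "\<dots> = fact (Suc m) * (\<Sum>\<alpha>\<in>multi_indices (Suc m). F \<alpha>)"
    by (simp only: fact_Suc mult.left_commute mult.assoc)
  finally show ?case
    using insert.hyps by (simp add: m_def F_def)
qed

lemma sum_child_labellings_eq_jacobian:
  assumes "d \<ge> 1" "finite C" "card C = d - 1"
  shows "(\<Sum>h\<in>C \<rightarrow>\<^sub>E UNIV. Hc a (incr_at (label_count C h) b) * (\<Prod>c\<in>C. x (h c))) =
         fact (d - 1) * jacobian d Hc x $ a $ b"
  using sum_labellings_eq_multinomial[OF assms(2), of "\<lambda>\<beta>. Hc a (incr_at \<beta> b)" x]
  by (simp add: assms(3) jacobian_eq_sum_multi_indices[OF assms(1)])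

section \<open>Matrix powers as sums over walks\<close>

definition walks :: "nat \<Rightarrow> 'n \<Rightarrow> 'n \<Rightarrow> (nat \<Rightarrow> 'n) set" where
  "walks p a b = {u \<in> {..p} \<rightarrow>\<^sub>E UNIV. u 0 = a \<and> u p = b}"

lemma finite_walks: "finite (walks p a (b::'n::finite))"
  unfolding walks_def by (rule finite_subset[of _ "{..p} \<rightarrow>\<^sub>E UNIV"]) (auto intro: finite_PiE)

lemma matpow_Suc: "matpow A (Suc p) = matpow A p ** A"
  by (simp add: matpow_def)

lemma matpow_eq_sum_walks:
  fixes A :: "'a::comm_ring_1^'n::finite^'n"
  shows "matpow A p $ a $ b = (\<Sum>u\<in>walks p a b. \<Prod>i<p. A $ u i $ u (Suc i))"
proof (induction p arbitrary: b)
  case 0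
  have "walks 0 a b = (if a = b then {\<lambda>i. if i = 0 then a else undefined} else {})"
    by (auto simp: walks_def PiE_def extensional_def fun_eq_iff)
  then show ?case
    by (simp add: matpow_def mat_def)
next
  case (Suc p)
  have "matpow A (Suc p) $ a $ b = (\<Sum>c\<in>UNIV. \<Sum>u\<in>walks p a c. (\<Prod>i<p. A $ u i $ u (Suc i)) * A $ c $ b)"
    by (simp add: matpow_Suc matrix_matrix_mult_def Suc.IH sum_distrib_right)
  also have "\<dots> = (\<Sum>(c, u)\<in>Sigma UNIV (walks p a). (\<Prod>i<p. A $ u i $ u (Suc i)) * A $ c $ b)"
    by (rule sum.Sigma) (auto simp: finite_walks)
  also have "\<dots> = (\<Sum>u\<in>walks (Suc p) a b. \<Prod>i<Suc p. A $ u i $ u (Suc i))"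
  proof (rule sum.reindex_bij_witness[of _ "\<lambda>u. (u p, restrict u {..p})" "\<lambda>(c, u). u(Suc p := b)"])
    fix cu assume "cu \<in> Sigma UNIV (walks p a)"
    then obtain c u where cu: "cu = (c, u)" and u: "u \<in> {..p} \<rightarrow>\<^sub>E UNIV" "u 0 = a" "u p = c"
      by (auto simp: walks_def)
    have "(\<Prod>i<p. A $ (u(Suc p := b)) i $ (u(Suc p := b)) (Suc i)) = (\<Prod>i<p. A $ u i $ u (Suc i))"
      by (rule prod.cong) auto
    with cu u show "(\<lambda>u. (u p, restrict u {..p})) (case cu of (c, u) \<Rightarrow> u(Suc p := b)) = cu"
      "(case cu of (c, u) \<Rightarrow> u(Suc p := b)) \<in> walks (Suc p) a b"
      "(\<Prod>i<Suc p. A $ (case cu of (c, u) \<Rightarrow> u(Suc p := b)) i $ (case cu of (c, u) \<Rightarrow> u(Suc p := b)) (Suc i)) =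
        (case cu of (c, u) \<Rightarrow> (\<Prod>i<p. A $ u i $ u (Suc i)) * A $ c $ b)"
      by (auto simp: walks_def fun_eq_iff PiE_def extensional_def)
  next
    fix u assume "u \<in> walks (Suc p) a b"
    then show "(\<lambda>u. (u p, restrict u {..p})) u \<in> Sigma UNIV (walks p a)"
      "(case (\<lambda>u. (u p, restrict u {..p})) u of (c, u) \<Rightarrow> u(Suc p := b)) = u"
      by (auto simp: walks_def fun_eq_iff PiE_def extensional_def)
  qed
  finally show ?case .
qed

section \<open>Coefficients of identically vanishing polynomials\<close>

lemma sum_powers_eq_0_imp_coeff_eq_0:
  fixes a :: "nat \<Rightarrow> complex"
  assumes "finite M" "\<And>t. (\<Sum>m\<in>M. t ^ m * a m) = 0" "m \<in> M"
  shows "a m = 0"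
proof -
  define P where "P = (\<Sum>m'\<in>M. monom (a m') m')"
  have "poly P t = 0" for t
    unfolding P_def poly_sum poly_monom using assms(2)[of t] by (simp add: mult_ac)
  then have "P = 0"
    using poly_all_0_iff_0 by blast
  moreover have "coeff P m = a m"
    unfolding P_def coeff_sum coeff_monom using assms(1,3) by (simp add: sum.delta)
  ultimately show ?thesis
    by simp
qed

text \<open>Induction on the variables: group by the exponent of v and apply the univariate case.\<close>

lemma sum_monomials_supported_eq_0_imp_coeff_eq_0:
  fixes c :: "('n::finite \<Rightarrow> nat) \<Rightarrow> complex"
  assumes "finite V" "finite G" "\<forall>\<beta>\<in>G. \<forall>j. j \<notin> V \<longrightarrow> \<beta> j = 0"
    and "\<And>x. (\<Sum>\<beta>\<in>G. c \<beta> * monomial x \<beta>) = 0" "\<beta> \<in> G"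
  shows "c \<beta> = 0"
  using assms
proof (induction V arbitrary: G c \<beta> rule: finite_induct)
  case empty
  then have "G = {\<lambda>_. 0}"
    by (auto simp: fun_eq_iff)
  then show ?case
    using empty.prems(3)[of undefined] empty.prems(4) by (simp add: monomial_def)
next
  case (insert v V)
  define G\<^sub>m where "G\<^sub>m m = {\<beta>'\<in>G. \<beta>' v = m}" for m
  have slice: "(\<Sum>\<beta>'\<in>G\<^sub>m m. c \<beta>' * monomial (x(v := 1)) \<beta>') = 0" if "m \<in> (\<lambda>\<beta>'. \<beta>' v) ` G" for m x
  proof (rule sum_powers_eq_0_imp_coeff_eq_0[OF _ _ that])
    fix t
    have "0 = (\<Sum>\<beta>'\<in>G. c \<beta>' * monomial (x(v := t)) \<beta>')"
      using insert.prems(3) by simp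
    also have "\<dots> = (\<Sum>m\<in>(\<lambda>\<beta>'. \<beta>' v) ` G. \<Sum>\<beta>'\<in>G\<^sub>m m. c \<beta>' * monomial (x(v := t)) \<beta>')"
      unfolding G\<^sub>m_def by (rule sum.image_gen[OF insert.prems(1)])
    also have "\<dots> = (\<Sum>m\<in>(\<lambda>\<beta>'. \<beta>' v) ` G. t ^ m * (\<Sum>\<beta>'\<in>G\<^sub>m m. c \<beta>' * monomial (x(v := 1)) \<beta>'))"
      unfolding sum_distrib_left
      by (intro sum.cong refl) (simp add: G\<^sub>m_def monomial_fun_upd[of x v t] mult_ac)
    finally show "(\<Sum>m\<in>(\<lambda>\<beta>'. \<beta>' v) ` G. t ^ m * (\<Sum>\<beta>'\<in>G\<^sub>m m. c \<beta>' * monomial (x(v := 1)) \<beta>')) = 0"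
      by simp
  qed (use insert.prems(1) in simp)
  have inj: "inj_on (\<lambda>\<beta>'. \<beta>'(v := 0)) (G\<^sub>m (\<beta> v))"
    by (auto simp: inj_on_def G\<^sub>m_def fun_eq_iff) metis
  have "c ((\<beta>(v := 0))(v := \<beta> v)) = 0"
  proof (rule insert.IH[where G = "(\<lambda>\<beta>'. \<beta>'(v := 0)) ` G\<^sub>m (\<beta> v)"
        and c = "\<lambda>\<gamma>. c (\<gamma>(v := \<beta> v))" and \<beta> = "\<beta>(v := 0)"])
    show "finite ((\<lambda>\<beta>'. \<beta>'(v := 0)) ` G\<^sub>m (\<beta> v))"
      using insert.prems(1) by (simp add: G\<^sub>m_def)
    show "\<forall>\<gamma>\<in>(\<lambda>\<beta>'. \<beta>'(v := 0)) ` G\<^sub>m (\<beta> v). \<forall>j. j \<notin> V \<longrightarrow> \<gamma> j = 0"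
      using insert.prems(2) by (auto simp: G\<^sub>m_def)
    show "\<beta>(v := 0) \<in> (\<lambda>\<beta>'. \<beta>'(v := 0)) ` G\<^sub>m (\<beta> v)"
      using insert.prems(4) by (auto simp: G\<^sub>m_def)
    fix x :: "'n \<Rightarrow> complex"
    have "c ((\<beta>'(v := 0))(v := \<beta> v)) * monomial x (\<beta>'(v := 0)) = c \<beta>' * monomial (x(v := 1)) \<beta>'"
      if "\<beta>' \<in> G\<^sub>m (\<beta> v)" for \<beta>'
    proof -
      have "(\<beta>'(v := 0))(v := \<beta> v) = \<beta>'"
        using that by (auto simp: G\<^sub>m_def)
      then show ?thesis
        using monomial_split[of x "\<beta>'(v := 0)" v] by (simp add: monomial_one_upd)
    qed
    then have "(\<Sum>\<gamma>\<in>(\<lambda>\<beta>'. \<beta>'(v := 0)) ` G\<^sub>m (\<beta> v). c (\<gamma>(v := \<beta> v)) * monomial x \<gamma>) =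
        (\<Sum>\<beta>'\<in>G\<^sub>m (\<beta> v). c \<beta>' * monomial (x(v := 1)) \<beta>')"
      unfolding sum.reindex[OF inj] comp_def by (rule sum.cong[OF refl])
    also have "\<dots> = 0"
      using slice insert.prems(4) by blast
    finally show "(\<Sum>\<gamma>\<in>(\<lambda>\<beta>'. \<beta>'(v := 0)) ` G\<^sub>m (\<beta> v). c (\<gamma>(v := \<beta> v)) * monomial x \<gamma>) = 0" .
  qed
  then show ?case
    by simp
qed

lemma sum_monomials_eq_0_imp_coeff_eq_0:
  fixes c :: "('n::finite \<Rightarrow> nat) \<Rightarrow> complex"
  assumes "finite G" "\<And>x. (\<Sum>\<beta>\<in>G. c \<beta> * monomial x \<beta>) = 0" "\<beta> \<in> G"
  shows "c \<beta> = 0"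
  using sum_monomials_supported_eq_0_imp_coeff_eq_0[of UNIV G c \<beta>] assms by simp

section \<open>Rearranging labels by permutations\<close>

lemma label_count_cong: "(\<And>r. r \<in> P \<Longrightarrow> g r = g' r) \<Longrightarrow> label_count P g = label_count P g'"
  unfolding label_count_def by (intro ext arg_cong[where f = card]) auto

lemma label_count_restrict: "C \<subseteq> P \<Longrightarrow> label_count C (restrict h P) = label_count C h"
  by (rule label_count_cong) auto

lemma label_count_permutes:
  assumes "\<sigma> permutes P"
  shows "label_count P (g \<circ> \<sigma>) = label_count P g"
proof
  fix j
  have "bij_betw \<sigma> {r\<in>P. g (\<sigma> r) = j} {r\<in>P. g r = j}"
  proof (rule bij_betw_imageI)
    show "inj_on \<sigma> {r\<in>P. g (\<sigma> r) = j}"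
      using permutes_inj_on[OF assms] .
    show "\<sigma> ` {r\<in>P. g (\<sigma> r) = j} = {r\<in>P. g r = j}"
    proof (intro equalityI subsetI)
      fix r assume "r \<in> {r\<in>P. g r = j}"
      then have "inv \<sigma> r \<in> {r\<in>P. g (\<sigma> r) = j}" "r = \<sigma> (inv \<sigma> r)"
        using permutes_in_image[OF permutes_inv[OF assms]] permutes_inverses(1)[OF assms] by auto
      then show "r \<in> \<sigma> ` {r\<in>P. g (\<sigma> r) = j}"
        by blast
    qed (auto simp: permutes_in_image[OF assms])
  qed
  then show "label_count P (g \<circ> \<sigma>) j = label_count P g j"
    by (simp add: label_count_def bij_betw_same_card)
qed

lemma permutes_of_label_count_eq:
  assumes "finite P" "label_count P h = label_count P g"
  obtains \<sigma> where "\<sigma> permutes P" "\<And>r. r \<in> P \<Longrightarrow> g (\<sigma> r) = h r"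
proof -
  have "\<exists>f. bij_betw f {r\<in>P. h r = j} {r\<in>P. g r = j}" for j
    using assms by (intro finite_same_card_bij) (auto simp: label_count_def fun_eq_iff)
  then obtain f where f: "\<And>j. bij_betw (f j) {r\<in>P. h r = j} {r\<in>P. g r = j}"
    by metis
  define \<sigma> where "\<sigma> r = (if r \<in> P then f (h r) r else r)" for r
  have \<sigma>: "\<sigma> r \<in> P \<and> g (\<sigma> r) = h r" if "r \<in> P" for r
    using f[of "h r"] that unfolding \<sigma>_def bij_betw_def by auto
  have "inj_on \<sigma> P"
  proof (rule inj_onI)
    fix r r' assume r: "r \<in> P" "r' \<in> P" "\<sigma> r = \<sigma> r'"
    then have "h r = h r'"
      using \<sigma> by metis
    moreover have "inj_on (f (h r)) {r''\<in>P. h r'' = h r}"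
      using f bij_betw_def by blast
    ultimately show "r = r'"
      using r by (auto simp: \<sigma>_def dest: inj_onD)
  qed
  moreover have "\<sigma> ` P \<subseteq> P"
    using \<sigma> by auto
  ultimately have "bij_betw \<sigma> P P"
    using endo_inj_surj[OF assms(1)] by (simp add: bij_betw_def)
  then have "\<sigma> permutes P"
    by (rule bij_imp_permutes) (simp add: \<sigma>_def)
  with \<sigma> show ?thesis
    using that by blast
qed

definition rearrangements :: "'a set \<Rightarrow> ('a \<Rightarrow> 'b) \<Rightarrow> ('a \<Rightarrow> 'b) set" where
  "rearrangements P g = {h \<in> P \<rightarrow>\<^sub>E UNIV. label_count P h = label_count P g}"

definition stabiliser :: "'a set \<Rightarrow> ('a \<Rightarrow> 'b) \<Rightarrow> ('a \<Rightarrow> 'a) set" where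
  "stabiliser P g = {\<pi>. \<pi> permutes P \<and> (\<forall>r\<in>P. g (\<pi> r) = g r)}"

lemma rearrangements_cong:
  "(\<And>r. r \<in> P \<Longrightarrow> g r = g' r) \<Longrightarrow> rearrangements P g = rearrangements P g'"
  unfolding rearrangements_def by (simp cong: label_count_cong)

lemma stabiliser_cong:
  assumes "\<And>r. r \<in> P \<Longrightarrow> g r = g' r"
  shows "stabiliser P g = stabiliser P g'"
  unfolding stabiliser_def using assms permutes_in_image by fastforce

lemma rearrangements_eq_image_permutes:
  assumes "finite P"
  shows "(\<lambda>\<sigma>. restrict (g \<circ> \<sigma>) P) ` {\<sigma>. \<sigma> permutes P} = rearrangements P g"
proof
  show "(\<lambda>\<sigma>. restrict (g \<circ> \<sigma>) P) ` {\<sigma>. \<sigma> permutes P} \<subseteq> rearrangements P g"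
    by (auto simp: rearrangements_def label_count_restrict label_count_permutes)
  show "rearrangements P g \<subseteq> (\<lambda>\<sigma>. restrict (g \<circ> \<sigma>) P) ` {\<sigma>. \<sigma> permutes P}"
  proof
    fix h assume h: "h \<in> rearrangements P g"
    then obtain \<sigma> where \<sigma>: "\<sigma> permutes P" "\<And>r. r \<in> P \<Longrightarrow> g (\<sigma> r) = h r"
      using permutes_of_label_count_eq[OF assms] by (auto simp: rearrangements_def)
    then have "restrict (g \<circ> \<sigma>) P = h"
      using h by (auto simp: rearrangements_def fun_eq_iff PiE_def extensional_def)
    with \<sigma> show "h \<in> (\<lambda>\<sigma>. restrict (g \<circ> \<sigma>) P) ` {\<sigma>. \<sigma> permutes P}"
      by blast
  qed
qed

lemma card_permutes_fibre:
  assumes "\<sigma>\<^sub>0 permutes P"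
  shows "card {\<sigma>. \<sigma> permutes P \<and> restrict (g \<circ> \<sigma>) P = restrict (g \<circ> \<sigma>\<^sub>0) P} = card (stabiliser P g)"
proof -
  have inv: "inv \<sigma>\<^sub>0 permutes P"
    using permutes_inv[OF assms] .
  have "bij_betw (\<lambda>\<pi>. \<pi> \<circ> \<sigma>\<^sub>0) (stabiliser P g)
      {\<sigma>. \<sigma> permutes P \<and> restrict (g \<circ> \<sigma>) P = restrict (g \<circ> \<sigma>\<^sub>0) P}"
  proof (rule bij_betw_byWitness[where f' = "\<lambda>\<sigma>. \<sigma> \<circ> inv \<sigma>\<^sub>0"])
    show "\<forall>\<pi>\<in>stabiliser P g. \<pi> \<circ> \<sigma>\<^sub>0 \<circ> inv \<sigma>\<^sub>0 = \<pi>"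
      using permutes_inv_o(1)[OF assms] by (simp add: comp_assoc)
    show "\<forall>\<sigma>\<in>{\<sigma>. \<sigma> permutes P \<and> restrict (g \<circ> \<sigma>) P = restrict (g \<circ> \<sigma>\<^sub>0) P}. \<sigma> \<circ> inv \<sigma>\<^sub>0 \<circ> \<sigma>\<^sub>0 = \<sigma>"
      using permutes_inv_o(2)[OF assms] by (simp add: comp_assoc)
    show "(\<lambda>\<pi>. \<pi> \<circ> \<sigma>\<^sub>0) ` stabiliser P g \<subseteq>
        {\<sigma>. \<sigma> permutes P \<and> restrict (g \<circ> \<sigma>) P = restrict (g \<circ> \<sigma>\<^sub>0) P}"
      using assms by (auto simp: stabiliser_def permutes_compose permutes_in_image fun_eq_iff)
    show "(\<lambda>\<sigma>. \<sigma> \<circ> inv \<sigma>\<^sub>0) ` {\<sigma>. \<sigma> permutes P \<and> restrict (g \<circ> \<sigma>) P = restrict (g \<circ> \<sigma>\<^sub>0) P} \<subseteq>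
        stabiliser P g"
    proof (rule image_subsetI, clarify)
      fix \<sigma> assume \<sigma>: "\<sigma> permutes P" "restrict (g \<circ> \<sigma>) P = restrict (g \<circ> \<sigma>\<^sub>0) P"
      have "g (\<sigma> (inv \<sigma>\<^sub>0 r)) = g r" if "r \<in> P" for r
        using fun_cong[OF \<sigma>(2), of "inv \<sigma>\<^sub>0 r"] that permutes_in_image[OF inv]
          permutes_inverses(1)[OF assms] by simp
      with \<sigma>(1) inv show "\<sigma> \<circ> inv \<sigma>\<^sub>0 \<in> stabiliser P g"
        by (simp add: stabiliser_def permutes_compose)
    qed
  qed
  then show ?thesis
    by (simp add: bij_betw_same_card)
qed

lemma sum_permutes_eq_card_stabiliser:
  fixes F :: "('a \<Rightarrow> 'b) \<Rightarrow> 'c::comm_semiring_1"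
  assumes "finite P"
  shows "(\<Sum>\<sigma>\<in>{\<sigma>. \<sigma> permutes P}. F (restrict (g \<circ> \<sigma>) P)) =
         of_nat (card (stabiliser P g)) * (\<Sum>h\<in>rearrangements P g. F h)"
proof -
  let ?\<phi> = "\<lambda>\<sigma>. restrict (g \<circ> \<sigma>) P"
  have "(\<Sum>\<sigma>\<in>{\<sigma>. \<sigma> permutes P}. F (?\<phi> \<sigma>)) =
      (\<Sum>h\<in>?\<phi> ` {\<sigma>. \<sigma> permutes P}. \<Sum>\<sigma>\<in>{\<sigma>\<in>{\<sigma>. \<sigma> permutes P}. ?\<phi> \<sigma> = h}. F (?\<phi> \<sigma>))"
    by (rule sum.image_gen[OF finite_permutations[OF assms]])
  also have "\<dots> = (\<Sum>h\<in>?\<phi> ` {\<sigma>. \<sigma> permutes P}. of_nat (card (stabiliser P g)) * F h)"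
  proof (rule sum.cong[OF refl])
    fix h assume "h \<in> ?\<phi> ` {\<sigma>. \<sigma> permutes P}"
    then obtain \<sigma>\<^sub>0 where "\<sigma>\<^sub>0 permutes P" "h = ?\<phi> \<sigma>\<^sub>0"
      by auto
    then show "(\<Sum>\<sigma>\<in>{\<sigma>\<in>{\<sigma>. \<sigma> permutes P}. ?\<phi> \<sigma> = h}. F (?\<phi> \<sigma>)) = of_nat (card (stabiliser P g)) * F h"
      using card_permutes_fibre[of \<sigma>\<^sub>0 P g] by simp
  qed
  finally show ?thesis
    by (simp add: rearrangements_eq_image_permutes[OF assms] sum_distrib_left)
qed

lemma card_stabiliser_pos: "finite P \<Longrightarrow> card (stabiliser P g) > 0"
  using finite_permutations[of P] by (auto simp: card_gt_0_iff stabiliser_def intro: exI[of _ id])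

lemma monomial_label_count:
  assumes "finite P"
  shows "monomial x (label_count P h) = (\<Prod>r\<in>P. x (h r))"
proof -
  have "(\<Prod>r\<in>P. x (h r)) = (\<Prod>j\<in>UNIV. \<Prod>r\<in>{r\<in>P. h r = j}. x (h r))"
    by (rule prod.group[symmetric]) (auto simp: assms)
  also have "\<dots> = (\<Prod>j\<in>UNIV. x j ^ label_count P h j)"
    by (intro prod.cong refl) (simp add: label_count_def)
  finally show ?thesis
    by (simp add: monomial_def)
qed

lemma sum_PiE_UNION_eq_prod_sum:
  fixes f :: "nat \<Rightarrow> ('a \<Rightarrow> 'b) \<Rightarrow> 'c::comm_semiring_1"
  assumes fin: "\<And>i. finite (C i)" "finite (UNIV :: 'b set)"
    and block: "\<And>i r. i < p \<Longrightarrow> r \<in> C i \<Longrightarrow> block r = i"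
  shows "(\<Sum>h\<in>(\<Union>i<p. C i) \<rightarrow>\<^sub>E (UNIV::'b set). \<Prod>i<p. f i (restrict h (C i))) =
         (\<Prod>i<p. \<Sum>y\<in>C i \<rightarrow>\<^sub>E (UNIV::'b set). f i y)"
proof -
  let ?glue = "\<lambda>H r. if r \<in> (\<Union>i<p. C i) then H (block r) r else undefined"
  have glue: "restrict (?glue H) (C i) = H i" if H: "H \<in> (\<Pi>\<^sub>E i\<in>{..<p}. C i \<rightarrow>\<^sub>E UNIV)" and i: "i < p" for H i
  proof
    fix r
    show "restrict (?glue H) (C i) r = H i r"
    proof (cases "r \<in> C i")
      case True
      then show ?thesis
        using block[OF i True] i by auto
    next
      case False
      have "H i \<in> C i \<rightarrow>\<^sub>E UNIV"
        using PiE_mem[OF H, of i] i by simp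
      then show ?thesis
        using PiE_arb[of "H i", OF _ False] False by simp
    qed
  qed
  have "(\<Prod>i<p. \<Sum>y\<in>C i \<rightarrow>\<^sub>E UNIV. f i y) = (\<Sum>H\<in>(\<Pi>\<^sub>E i\<in>{..<p}. C i \<rightarrow>\<^sub>E UNIV). \<Prod>i<p. f i (H i))"
    by (rule prod_sum_PiE) (simp_all add: fin finite_PiE)
  also have "\<dots> = (\<Sum>h\<in>(\<Union>i<p. C i) \<rightarrow>\<^sub>E UNIV. \<Prod>i<p. f i (restrict h (C i)))"
  proof (rule sum.reindex_bij_witness[of _ "\<lambda>h. \<lambda>i\<in>{..<p}. restrict h (C i)" ?glue])
    fix H :: "nat \<Rightarrow> 'a \<Rightarrow> 'b" assume H: "H \<in> (\<Pi>\<^sub>E i\<in>{..<p}. C i \<rightarrow>\<^sub>E UNIV)"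
    show "(\<lambda>i\<in>{..<p}. restrict (?glue H) (C i)) = H"
    proof
      fix i
      show "(\<lambda>i\<in>{..<p}. restrict (?glue H) (C i)) i = H i"
        using glue[OF H, of i] PiE_arb[OF H, of i] by (cases "i < p") simp_all
    qed
    show "?glue H \<in> (\<Union>i<p. C i) \<rightarrow>\<^sub>E UNIV"
      by (simp add: PiE_iff extensional_def)
    show "(\<Prod>i<p. f i (restrict (?glue H) (C i))) = (\<Prod>i<p. f i (H i))"
      using glue[OF H] by simp
  next
    fix h :: "'a \<Rightarrow> 'b" assume h: "h \<in> (\<Union>i<p. C i) \<rightarrow>\<^sub>E UNIV"
    show "(\<lambda>i\<in>{..<p}. restrict h (C i)) \<in> (\<Pi>\<^sub>E i\<in>{..<p}. C i \<rightarrow>\<^sub>E UNIV)"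
      by simp
    show "?glue (\<lambda>i\<in>{..<p}. restrict h (C i)) = h"
    proof
      fix r
      show "?glue (\<lambda>i\<in>{..<p}. restrict h (C i)) r = h r"
        using block PiE_arb[OF h, of r] by auto
    qed
  qed
  finally show ?thesis ..
qed

text \<open>
  The weight of v_0, ..., v_(p-1) on a path whose vertex v_i has type u i, whose other children
  C i are typed by h, and whose path child v_(i+1) has type u (i+1).
\<close>

definition walk_weight :: "('n \<Rightarrow> ('n \<Rightarrow> nat) \<Rightarrow> 'c::comm_monoid_mult) \<Rightarrow> nat \<Rightarrow> (nat \<Rightarrow> 'a set) \<Rightarrow>
    (nat \<Rightarrow> 'n) \<Rightarrow> ('a \<Rightarrow> 'n) \<Rightarrow> 'c" where
  "walk_weight Hc p C u h = (\<Prod>i<p. Hc (u i) (incr_at (label_count (C i) h) (u (Suc i))))"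

lemma walk_weight_cong:
  "(\<And>i. i \<le> p \<Longrightarrow> u i = u' i) \<Longrightarrow> walk_weight Hc p C u h = walk_weight Hc p C u' h"
  unfolding walk_weight_def by (intro prod.cong refl) simp

context
  fixes Hc :: "'n::finite \<Rightarrow> ('n \<Rightarrow> nat) \<Rightarrow> complex" and d p :: nat and C :: "nat \<Rightarrow> 'a set"
    and block :: "'a \<Rightarrow> nat"
  assumes d: "d \<ge> 1"
    and finite_C: "\<And>i. finite (C i)"
    and card_C: "\<And>i. i < p \<Longrightarrow> card (C i) = d - 1"
    and block: "\<And>i r. i < p \<Longrightarrow> r \<in> C i \<Longrightarrow> block r = i"
begin

lemma sum_walk_weights_monomials_eq_matpow:
  "(\<Sum>h\<in>(\<Union>i<p. C i) \<rightarrow>\<^sub>E UNIV.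
      (\<Sum>u\<in>walks p a b. walk_weight Hc p C u h) * monomial x (label_count (\<Union>i<p. C i) h)) =
   fact (d - 1) ^ p * matpow (jacobian d Hc x) p $ a $ b"
proof -
  let ?P = "\<Union>i<p. C i"
  define F where "F u i y = Hc (u i) (incr_at (label_count (C i) y) (u (Suc i))) * (\<Prod>r\<in>C i. x (y r))"
    for u i y
  have "\<forall>i\<in>{..<p}. \<forall>j\<in>{..<p}. i \<noteq> j \<longrightarrow> C i \<inter> C j = {}"
    using block by blast
  then have monomial_eq: "monomial x (label_count ?P h) = (\<Prod>i<p. \<Prod>r\<in>C i. x (restrict h (C i) r))" for h
    using finite_C by (simp add: monomial_label_count prod.UNION_disjoint cong: prod.cong)
  have "(\<Sum>h\<in>?P \<rightarrow>\<^sub>E UNIV. (\<Sum>u\<in>walks p a b. walk_weight Hc p C u h) * monomial x (label_count ?P h)) =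
      (\<Sum>h\<in>?P \<rightarrow>\<^sub>E UNIV. \<Sum>u\<in>walks p a b. \<Prod>i<p. F u i (restrict h (C i)))"
    by (intro sum.cong refl)
      (simp add: monomial_eq walk_weight_def F_def sum_distrib_right prod.distrib label_count_restrict)
  also have "\<dots> = (\<Sum>u\<in>walks p a b. \<Sum>h\<in>?P \<rightarrow>\<^sub>E UNIV. \<Prod>i<p. F u i (restrict h (C i)))"
    by (rule sum.swap)
  also have "\<dots> = (\<Sum>u\<in>walks p a b. \<Prod>i<p. \<Sum>y\<in>C i \<rightarrow>\<^sub>E UNIV. F u i y)"
    by (intro sum.cong refl sum_PiE_UNION_eq_prod_sum[where block = block] finite_C block) simp_all
  also have "\<dots> = (\<Sum>u\<in>walks p a b. \<Prod>i<p. fact (d - 1) * jacobian d Hc x $ u i $ u (Suc i))"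
    unfolding F_def by (intro sum.cong prod.cong refl sum_child_labellings_eq_jacobian d finite_C card_C) simp
  also have "\<dots> = fact (d - 1) ^ p * matpow (jacobian d Hc x) p $ a $ b"
    by (simp add: prod.distrib sum_distrib_left matpow_eq_sum_walks)
  finally show ?thesis .
qed

lemma sum_rearrangements_walk_weights_eq_0:
  assumes nilpotent: "\<forall>x. matpow (jacobian d Hc x) p = 0"
  shows "(\<Sum>h\<in>rearrangements (\<Union>i<p. C i) g. \<Sum>u\<in>walks p a b. walk_weight Hc p C u h) = 0"
proof -
  let ?P = "\<Union>i<p. C i"
  let ?S = "?P \<rightarrow>\<^sub>E (UNIV::'n set)"
  let ?coeff = "\<lambda>\<gamma>. \<Sum>h\<in>{h\<in>?S. label_count ?P h = \<gamma>}. \<Sum>u\<in>walks p a b. walk_weight Hc p C u h"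
  have fin: "finite ?S"
    using finite_C by (simp add: finite_PiE)
  have "?coeff (label_count ?P g) = 0"
  proof (rule sum_monomials_eq_0_imp_coeff_eq_0)
    show "finite (label_count ?P ` ?S)"
      using fin by (rule finite_imageI)
    show "label_count ?P g \<in> label_count ?P ` ?S"
      by (rule image_eqI[of _ _ "restrict g ?P"]) (simp_all add: label_count_restrict)
    fix x
    have "(\<Sum>\<gamma>\<in>label_count ?P ` ?S. ?coeff \<gamma> * monomial x \<gamma>) =
        (\<Sum>\<gamma>\<in>label_count ?P ` ?S. \<Sum>h\<in>{h\<in>?S. label_count ?P h = \<gamma>}.
          (\<Sum>u\<in>walks p a b. walk_weight Hc p C u h) * monomial x (label_count ?P h))"
      by (intro sum.cong refl) (simp add: sum_distrib_right)
    also have "\<dots> = (\<Sum>h\<in>?S. (\<Sum>u\<in>walks p a b. walk_weight Hc p C u h) * monomial x (label_count ?P h))"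
      by (rule sum.image_gen[OF fin, symmetric])
    also have "\<dots> = 0"
      using nilpotent by (simp add: sum_walk_weights_monomials_eq_matpow)
    finally show "(\<Sum>\<gamma>\<in>label_count ?P ` ?S. ?coeff \<gamma> * monomial x \<gamma>) = 0" .
  qed
  then show ?thesis
    by (simp add: rearrangements_def)
qed

end

definition labellings :: "nat list set \<Rightarrow> 'n \<Rightarrow> ('n \<Rightarrow> nat) \<Rightarrow> (nat list \<Rightarrow> 'n) set" where
  "labellings T i \<alpha> = {\<tau> \<in> T \<rightarrow>\<^sub>E UNIV. is_labelling T i \<alpha> \<tau>}"

lemma E_weight_eq_sum_labellings:
  "E_weight Hc i \<alpha> T =
    (\<Sum>\<tau>\<in>labellings T i \<alpha>. \<Prod>v\<in>internal_vertices T. Hc (\<tau> v) (child_type_count T \<tau> v))"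
  by (simp add: E_weight_def labellings_def)

lemma finite_labellings: "finite T \<Longrightarrow> finite (labellings T i (\<alpha> :: 'n::finite \<Rightarrow> nat))"
  unfolding labellings_def by (rule finite_subset[of _ "T \<rightarrow>\<^sub>E UNIV"]) (auto intro: finite_PiE)

lemma is_labelling_cong:
  assumes "\<tau> [] = \<tau>' []" "\<And>w. w \<in> leaves T \<Longrightarrow> \<tau> w = \<tau>' w"
  shows "is_labelling T i \<alpha> \<tau> \<longleftrightarrow> is_labelling T i \<alpha> \<tau>'"
proof -
  have "{w \<in> leaves T. \<tau> w = j} = {w \<in> leaves T. \<tau>' w = j}" for j
    using assms(2) by auto
  then show ?thesis
    using assms(1) by (simp add: is_labelling_def)
qed

context
  fixes f :: "nat list \<Rightarrow> nat list" and S T :: "nat list set"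
  assumes bij: "bij_betw f S T" and root: "[] \<in> S" "f [] = []"
    and leaves: "\<And>w. w \<in> S \<Longrightarrow> w \<in> leaves S \<longleftrightarrow> f w \<in> leaves T"
begin

lemma is_labelling_comp_iff: "is_labelling S i \<alpha> (\<tau> \<circ> f) \<longleftrightarrow> is_labelling T i \<alpha> \<tau>"
proof -
  have leaves_S: "leaves S \<subseteq> S"
    by (auto simp: leaves_def)
  have image: "f ` {v \<in> leaves S. \<tau> (f v) = j} = {w \<in> leaves T. \<tau> w = j}" for j
  proof (intro equalityI subsetI)
    fix w assume w: "w \<in> {w \<in> leaves T. \<tau> w = j}"
    then obtain v where "v \<in> S" "w = f v"
      using bij_betw_imp_surj_on[OF bij] by (force simp: leaves_def)
    with w leaves show "w \<in> f ` {v \<in> leaves S. \<tau> (f v) = j}"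
      by blast
  qed (use leaves leaves_S in auto)
  have "inj_on f {v \<in> leaves S. \<tau> (f v) = j}" for j
    by (rule inj_on_subset[OF bij_betw_imp_inj_on[OF bij]]) (use leaves_S in auto)
  then have "card {w \<in> leaves T. \<tau> w = j} = card {v \<in> leaves S. \<tau> (f v) = j}" for j
    unfolding image[symmetric] by (rule card_image)
  then show ?thesis
    using root by (simp add: is_labelling_def)
qed

lemma E_weight_eq_sum_labellings_comp:
  "E_weight Hc i \<alpha> S = (\<Sum>\<tau>\<in>labellings T i \<alpha>.
     \<Prod>v\<in>internal_vertices S. Hc (\<tau> (f v)) (child_type_count S (\<tau> \<circ> f) v))"
proof -
  let ?to_S = "\<lambda>\<tau>. restrict (\<tau> \<circ> f) S"
  let ?to_T = "\<lambda>\<tau>'. restrict (\<tau>' \<circ> inv_into S f) T"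
  have restrict_iff: "is_labelling S i \<alpha> (restrict \<tau>' S) \<longleftrightarrow> is_labelling S i \<alpha> \<tau>'" for \<tau>'
    using root by (intro is_labelling_cong) (auto simp: leaves_def)
  have "(\<Sum>\<tau>\<in>labellings T i \<alpha>. \<Prod>v\<in>internal_vertices S. Hc (\<tau> (f v)) (child_type_count S (\<tau> \<circ> f) v)) =
      (\<Sum>\<tau>'\<in>labellings S i \<alpha>. \<Prod>v\<in>internal_vertices S. Hc (\<tau>' v) (child_type_count S \<tau>' v))"
  proof (rule sum.reindex_bij_witness[of _ ?to_T ?to_S])
    fix \<tau> assume \<tau>: "\<tau> \<in> labellings T i \<alpha>"
    show "?to_T (?to_S \<tau>) = \<tau>"
    proof
      fix w
      show "?to_T (?to_S \<tau>) w = \<tau> w"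
      proof (cases "w \<in> T")
        case True
        then show ?thesis
          using bij_betw_inv_into_right[OF bij True] bij_betw_apply[OF bij_betw_inv_into[OF bij] True]
          by simp
      next
        case False
        then show ?thesis
          using \<tau> PiE_arb[of \<tau> T "\<lambda>_. UNIV" w] by (simp add: labellings_def)
      qed
    qed
    show "?to_S \<tau> \<in> labellings S i \<alpha>"
      using \<tau> by (simp add: labellings_def restrict_iff is_labelling_comp_iff)
    show "(\<Prod>v\<in>internal_vertices S. Hc (?to_S \<tau> v) (child_type_count S (?to_S \<tau>) v)) =
        (\<Prod>v\<in>internal_vertices S. Hc (\<tau> (f v)) (child_type_count S (\<tau> \<circ> f) v))"
    proof (intro prod.cong refl)
      fix v assume "v \<in> internal_vertices S"
      then have "v \<in> S"
        by (simp add: internal_vertices_def)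
      moreover have "child_type_count S (?to_S \<tau>) v = child_type_count S (\<tau> \<circ> f) v"
        unfolding child_type_count_def by (intro ext arg_cong[where f = card]) auto
      ultimately show "Hc (?to_S \<tau> v) (child_type_count S (?to_S \<tau>) v) =
          Hc (\<tau> (f v)) (child_type_count S (\<tau> \<circ> f) v)"
        by simp
    qed
  next
    fix \<tau>' assume \<tau>': "\<tau>' \<in> labellings S i \<alpha>"
    show "?to_S (?to_T \<tau>') = \<tau>'"
    proof
      fix v
      show "?to_S (?to_T \<tau>') v = \<tau>' v"
      proof (cases "v \<in> S")
        case True
        then show ?thesis
          using bij_betw_inv_into_left[OF bij True] bij_betw_apply[OF bij True] by simp
      next
        case False
        then show ?thesis
          using \<tau>' PiE_arb[of \<tau>' S "\<lambda>_. UNIV" v] by (simp add: labellings_def)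
      qed
    qed
    then have "is_labelling T i \<alpha> (?to_T \<tau>')"
      using \<tau>' is_labelling_comp_iff[of i \<alpha> "?to_T \<tau>'"] restrict_iff[of "?to_T \<tau>' \<circ> f"]
      by (simp add: labellings_def)
    then show "?to_T \<tau>' \<in> labellings T i \<alpha>"
      by (simp add: labellings_def)
  qed
  then show ?thesis
    by (simp add: E_weight_eq_sum_labellings)
qed

end

section \<open>Shuffling subtrees\<close>

locale subtree_shuffle =
  fixes T :: "nat list set" and P :: "nat list set"
  assumes finite_T: "finite T"
    and root_T: "[] \<in> T"
    and prefix_closed: "\<And>v c. v @ [c] \<in> T \<Longrightarrow> v \<in> T"
    and P_subset: "P \<subseteq> T"
    and root_notin_P: "[] \<notin> P"
    and prefix_free: "\<And>q q' z. q \<in> P \<Longrightarrow> q' \<in> P \<Longrightarrow> q = q' @ z \<Longrightarrow> z = []"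
begin

definition below :: "nat list \<Rightarrow> bool" where
  "below w \<longleftrightarrow> (\<exists>q\<in>P. \<exists>u. w = q @ u)"

definition base :: "nat list \<Rightarrow> nat list" where
  "base w = (THE q. q \<in> P \<and> (\<exists>u. w = q @ u))"

definition graft :: "(nat list \<Rightarrow> nat list set) \<Rightarrow> nat list set" where
  "graft h = {w \<in> T. \<not> below w} \<union> (\<Union>q\<in>P. (\<lambda>u. q @ u) ` h q)"

definition shuffled :: "(nat list \<Rightarrow> nat list) \<Rightarrow> nat list set" where
  "shuffled \<sigma> = graft (\<lambda>q. subtree_at T (\<sigma> q))"

definition unshuffle :: "(nat list \<Rightarrow> nat list) \<Rightarrow> nat list \<Rightarrow> nat list" where
  "unshuffle \<sigma> w = (if below w then \<sigma> (base w) @ drop (length (base w)) w else w)"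

definition parents :: "nat list set" where
  "parents = {w. \<exists>c. w @ [c] \<in> P}"

lemma prefix_free_append_eq:
  assumes "q \<in> P" "q' \<in> P" "q @ x = q' @ y"
  shows "q = q' \<and> x = y"
proof -
  obtain us where us: "q = q' @ us \<and> us @ x = y \<or> q @ us = q' \<and> x = us @ y"
    using append_eq_append_conv2[THEN iffD1, OF assms(3)] by blast
  then have "us = []"
    using prefix_free[OF assms(1,2), of us] prefix_free[OF assms(2,1), of us] by blast
  with us show ?thesis
    by simp
qed

lemma below_append: "q \<in> P \<Longrightarrow> below (q @ u)"
  unfolding below_def by blast

lemma base_append: "q \<in> P \<Longrightarrow> base (q @ u) = q"
  unfolding base_def by (rule the_equality) (auto dest: prefix_free_append_eq)

lemma unshuffle_append: "q \<in> P \<Longrightarrow> unshuffle \<sigma> (q @ u) = \<sigma> q @ u"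
  by (simp add: unshuffle_def below_append base_append)

lemma unshuffle_not_below: "\<not> below w \<Longrightarrow> unshuffle \<sigma> w = w"
  by (simp add: unshuffle_def)

lemma below_snoc:
  assumes "w @ [c] \<notin> P"
  shows "below (w @ [c]) \<longleftrightarrow> below w"
proof
  assume "below (w @ [c])"
  then obtain q u where q: "q \<in> P" "w @ [c] = q @ u"
    by (auto simp: below_def)
  with assms have "u \<noteq> []"
    by auto
  with q(2) obtain u' where "w = q @ u'"
    by (cases u rule: rev_cases) auto
  with q(1) show "below w"
    by (auto simp: below_def)
next
  assume "below w"
  then show "below (w @ [c])"
    by (metis below_def append_assoc)
qed

lemma mem_graft: "q \<in> P \<Longrightarrow> q @ x \<in> graft h \<longleftrightarrow> x \<in> h q"
  by (auto simp: graft_def below_append dest: prefix_free_append_eq)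

lemma mem_graft_not_below: "\<not> below w \<Longrightarrow> w \<in> graft h \<longleftrightarrow> w \<in> T"
  by (auto simp: graft_def below_append)

lemma mem_shuffled: "q \<in> P \<Longrightarrow> q @ x \<in> shuffled \<sigma> \<longleftrightarrow> \<sigma> q @ x \<in> T"
  by (simp add: shuffled_def mem_graft subtree_at_def)

lemma mem_shuffledE:
  assumes "w \<in> shuffled \<sigma>"
  obtains "w \<in> T" "\<not> below w" | q u where "q \<in> P" "w = q @ u" "\<sigma> q @ u \<in> T"
  using assms by (auto simp: shuffled_def graft_def subtree_at_def)

lemma unshuffle_comp:
  assumes "\<sigma> ` P \<subseteq> P"
  shows "unshuffle \<pi> (unshuffle \<sigma> w) = unshuffle (\<pi> \<circ> \<sigma>) w"
proof (cases "below w")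
  case True
  then obtain q u where "q \<in> P" "w = q @ u"
    by (auto simp: below_def)
  moreover have "\<sigma> q \<in> P"
    using assms \<open>q \<in> P\<close> by blast
  ultimately show ?thesis
    by (simp add: unshuffle_append)
qed (simp add: unshuffle_not_below)

lemma unshuffle_id: "unshuffle id w = w"
proof (cases "below w")
  case True
  then obtain q u where "q \<in> P" "w = q @ u"
    by (auto simp: below_def)
  then show ?thesis
    by (simp add: unshuffle_append)
qed (simp add: unshuffle_not_below)

lemma bij_betw_unshuffle:
  assumes \<sigma>: "\<sigma> permutes P"
  shows "bij_betw (unshuffle \<sigma>) (shuffled \<sigma>) T"
proof (rule bij_betw_byWitness[where f' = "unshuffle (inv \<sigma>)"])
  have inv: "inv \<sigma> permutes P"
    using permutes_inv[OF \<sigma>] .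
  show "\<forall>w\<in>shuffled \<sigma>. unshuffle (inv \<sigma>) (unshuffle \<sigma> w) = w"
    using \<sigma> by (simp add: unshuffle_comp permutes_image permutes_inv_o(2) unshuffle_id)
  show "\<forall>w\<in>T. unshuffle \<sigma> (unshuffle (inv \<sigma>) w) = w"
    using \<sigma> inv by (simp add: unshuffle_comp permutes_image permutes_inv_o(1) unshuffle_id)
  show "unshuffle \<sigma> ` shuffled \<sigma> \<subseteq> T"
    by (auto elim: mem_shuffledE simp: unshuffle_append unshuffle_not_below)
  show "unshuffle (inv \<sigma>) ` T \<subseteq> shuffled \<sigma>"
  proof (rule image_subsetI)
    fix w assume w: "w \<in> T"
    show "unshuffle (inv \<sigma>) w \<in> shuffled \<sigma>"
    proof (cases "below w")
      case True
      then obtain r u where "r \<in> P" "w = r @ u"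
        by (auto simp: below_def)
      then show ?thesis
        using w permutes_in_image[OF inv] permutes_inverses(1)[OF \<sigma>]
        by (simp add: unshuffle_append mem_shuffled)
    next
      case False
      then show ?thesis
        using w by (simp add: unshuffle_not_below shuffled_def mem_graft_not_below)
    qed
  qed
qed

lemma root_shuffled: "[] \<in> shuffled \<sigma>" and unshuffle_root: "unshuffle \<sigma> [] = []"
proof -
  have "\<not> below []"
    using root_notin_P by (simp add: below_def)
  then show "[] \<in> shuffled \<sigma>" "unshuffle \<sigma> [] = []"
    by (simp_all add: shuffled_def mem_graft_not_below root_T unshuffle_not_below)
qed

lemma unshuffle_snoc:
  assumes "w @ [c] \<notin> P"
  shows "unshuffle \<sigma> (w @ [c]) = unshuffle \<sigma> w @ [c]"
proof (cases "below w")
  case True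
  then obtain q u where "q \<in> P" "w = q @ u"
    by (auto simp: below_def)
  then show ?thesis
    using unshuffle_append[where u = "u @ [c]"] by (simp add: unshuffle_append)
next
  case False
  then show ?thesis
    using assms by (simp add: below_snoc unshuffle_not_below)
qed

lemma snoc_mem_shuffled:
  assumes "w @ [c] \<notin> P"
  shows "w @ [c] \<in> shuffled \<sigma> \<longleftrightarrow> unshuffle \<sigma> w @ [c] \<in> T"
proof (cases "below w")
  case True
  then obtain q u where "q \<in> P" "w = q @ u"
    by (auto simp: below_def)
  then show ?thesis
    using mem_shuffled[where x = "u @ [c]"] by (simp add: unshuffle_append)
next
  case False
  then show ?thesis
    using assms by (simp add: below_snoc unshuffle_not_below shuffled_def mem_graft_not_below)
qed

lemma parent_not_below:
  assumes "w \<in> parents"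
  shows "\<not> below w"
proof
  assume "below w"
  then obtain q u where "q \<in> P" "w = q @ u"
    by (auto simp: below_def)
  moreover obtain c where "w @ [c] \<in> P"
    using assms by (auto simp: parents_def)
  ultimately show False
    using prefix_free[of "w @ [c]" q "u @ [c]"] by simp
qed

lemma unshuffle_parent: "w \<in> parents \<Longrightarrow> unshuffle \<sigma> w = w"
  by (simp add: parent_not_below unshuffle_not_below)

lemma parents_subset_internal: "parents \<subseteq> internal_vertices T"
  using P_subset prefix_closed by (auto simp: parents_def internal_vertices_def)

lemma P_subset_shuffled: "\<sigma> permutes P \<Longrightarrow> P \<subseteq> shuffled \<sigma>"
  using mem_shuffled[where x = "[]"] P_subset permutes_in_image by fastforce

lemma parents_subset_internal_shuffled: "\<sigma> permutes P \<Longrightarrow> parents \<subseteq> internal_vertices (shuffled \<sigma>)"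
  using parents_subset_internal P_subset_shuffled parent_not_below
  by (fastforce simp: internal_vertices_def parents_def shuffled_def mem_graft_not_below)

lemma unshuffle_in_parents_iff:
  assumes \<sigma>: "\<sigma> permutes P"
  shows "unshuffle \<sigma> w \<in> parents \<longleftrightarrow> w \<in> parents"
proof (cases "below w")
  case True
  then obtain q u where "q \<in> P" "w = q @ u"
    by (auto simp: below_def)
  then have "below (unshuffle \<sigma> w)"
    using permutes_in_image[OF \<sigma>] by (simp add: unshuffle_append below_append)
  then show ?thesis
    using True parent_not_below by blast
qed (simp add: unshuffle_not_below)

lemma internal_shuffled_iff:
  assumes \<sigma>: "\<sigma> permutes P" and w: "w \<in> shuffled \<sigma>"
  shows "w \<in> internal_vertices (shuffled \<sigma>) \<longleftrightarrow> unshuffle \<sigma> w \<in> internal_vertices T"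
proof (cases "w \<in> parents")
  case True
  then show ?thesis
    using parents_subset_internal_shuffled[OF \<sigma>] parents_subset_internal
    by (auto simp: unshuffle_parent)
next
  case False
  then have "w @ [c] \<in> shuffled \<sigma> \<longleftrightarrow> unshuffle \<sigma> w @ [c] \<in> T" for c
    by (simp add: parents_def snoc_mem_shuffled)
  moreover have "unshuffle \<sigma> w \<in> T"
    using bij_betw_apply[OF bij_betw_unshuffle[OF \<sigma>] w] .
  ultimately show ?thesis
    using w by (simp add: internal_vertices_def)
qed

lemma leaf_shuffled_iff:
  assumes \<sigma>: "\<sigma> permutes P" and w: "w \<in> shuffled \<sigma>"
  shows "w \<in> leaves (shuffled \<sigma>) \<longleftrightarrow> unshuffle \<sigma> w \<in> leaves T"
  using internal_shuffled_iff[OF assms] bij_betw_apply[OF bij_betw_unshuffle[OF \<sigma>] w] w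
  by (auto simp: internal_vertices_def leaves_def)

lemma child_type_count_shuffled:
  assumes "w \<notin> parents"
  shows "child_type_count (shuffled \<sigma>) (\<tau> \<circ> unshuffle \<sigma>) w = child_type_count T \<tau> (unshuffle \<sigma> w)"
proof -
  have "w @ [c] \<notin> P" for c
    using assms by (auto simp: parents_def)
  then show ?thesis
    by (simp add: child_type_count_def snoc_mem_shuffled unshuffle_snoc)
qed

lemma E_weight_shuffled:
  assumes \<sigma>: "\<sigma> permutes P"
  shows "E_weight Hc i \<alpha> (shuffled \<sigma>) = (\<Sum>\<tau>\<in>labellings T i \<alpha>.
    (\<Prod>w\<in>internal_vertices T - parents. Hc (\<tau> w) (child_type_count T \<tau> w)) *
    (\<Prod>v\<in>parents. Hc (\<tau> v) (child_type_count (shuffled \<sigma>) (\<tau> \<circ> unshuffle \<sigma>) v)))"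
proof -
  let ?S = "shuffled \<sigma>" and ?u = "unshuffle \<sigma>"
  have bij: "bij_betw ?u ?S T"
    by (rule bij_betw_unshuffle[OF \<sigma>])
  have "bij_betw ?u {v\<in>?S. v \<in> internal_vertices ?S \<and> v \<notin> parents}
      {w\<in>T. w \<in> internal_vertices T \<and> w \<notin> parents}"
    by (rule bij_betw_Collect[OF bij]) (simp add: internal_shuffled_iff[OF \<sigma>] unshuffle_in_parents_iff[OF \<sigma>])
  moreover have "{v\<in>?S. v \<in> internal_vertices ?S \<and> v \<notin> parents} = internal_vertices ?S - parents"
    "{w\<in>T. w \<in> internal_vertices T \<and> w \<notin> parents} = internal_vertices T - parents"
    by (auto simp: internal_vertices_def)
  ultimately have "bij_betw ?u (internal_vertices ?S - parents) (internal_vertices T - parents)"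
    by simp
  then have off_parents: "(\<Prod>v\<in>internal_vertices ?S - parents. Hc (\<tau> (?u v)) (child_type_count ?S (\<tau> \<circ> ?u) v)) =
      (\<Prod>w\<in>internal_vertices T - parents. Hc (\<tau> w) (child_type_count T \<tau> w))" for \<tau>
    by (simp add: child_type_count_shuffled prod.reindex_bij_betw[symmetric])
  have fin: "finite (internal_vertices ?S)"
    using bij_betw_finite[OF bij] finite_T by (auto simp: internal_vertices_def intro: finite_subset)
  have "(\<Prod>v\<in>internal_vertices ?S. Hc (\<tau> (?u v)) (child_type_count ?S (\<tau> \<circ> ?u) v)) =
      (\<Prod>w\<in>internal_vertices T - parents. Hc (\<tau> w) (child_type_count T \<tau> w)) *
      (\<Prod>v\<in>parents. Hc (\<tau> v) (child_type_count ?S (\<tau> \<circ> ?u) v))" for \<tau>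
  proof -
    have "(\<Prod>v\<in>parents. Hc (\<tau> (?u v)) (child_type_count ?S (\<tau> \<circ> ?u) v)) =
        (\<Prod>v\<in>parents. Hc (\<tau> v) (child_type_count ?S (\<tau> \<circ> ?u) v))"
      by (rule prod.cong) (simp_all add: unshuffle_parent)
    then show ?thesis
      unfolding prod.subset_diff[OF parents_subset_internal_shuffled[OF \<sigma>] fin] off_parents by simp
  qed
  moreover have "E_weight Hc i \<alpha> ?S = (\<Sum>\<tau>\<in>labellings T i \<alpha>.
      \<Prod>v\<in>internal_vertices ?S. Hc (\<tau> (?u v)) (child_type_count ?S (\<tau> \<circ> ?u) v))"
    using bij root_shuffled unshuffle_root leaf_shuffled_iff[OF \<sigma>]
    by (rule E_weight_eq_sum_labellings_comp)
  ultimately show ?thesis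
    by simp
qed

lemma child_type_count_shuffled_parent:
  assumes \<sigma>: "\<sigma> permutes P" and v: "v \<in> parents"
    and spine: "{c. v @ [c] \<in> T \<and> v @ [c] \<notin> P} = {c\<^sub>0}"
  shows "child_type_count (shuffled \<sigma>) (\<tau> \<circ> unshuffle \<sigma>) v =
    incr_at (label_count {r\<in>P. \<exists>c. r = v @ [c]} (\<tau> \<circ> \<sigma>)) (\<tau> (v @ [c\<^sub>0]))"
proof
  fix j
  let ?A = "{c. v @ [c] \<in> P \<and> \<tau> (\<sigma> (v @ [c])) = j}"
  have "{c. v @ [c] \<in> shuffled \<sigma> \<and> \<tau> (unshuffle \<sigma> (v @ [c])) = j} =
      ?A \<union> {c. c = c\<^sub>0 \<and> \<tau> (v @ [c\<^sub>0]) = j}"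
  proof (intro set_eqI)
    fix c
    show "c \<in> {c. v @ [c] \<in> shuffled \<sigma> \<and> \<tau> (unshuffle \<sigma> (v @ [c])) = j} \<longleftrightarrow>
        c \<in> ?A \<union> {c. c = c\<^sub>0 \<and> \<tau> (v @ [c\<^sub>0]) = j}"
    proof (cases "v @ [c] \<in> P")
      case True
      then show ?thesis
        using P_subset_shuffled[OF \<sigma>] unshuffle_append[OF True, of \<sigma> "[]"] spine by auto
    next
      case False
      then show ?thesis
        using spine by (auto simp: snoc_mem_shuffled unshuffle_snoc unshuffle_parent[OF v])
    qed
  qed
  moreover have "finite ?A"
    using finite_vimageI[OF finite_subset[OF P_subset finite_T], of "\<lambda>c. v @ [c]"]
    by (rule finite_subset[rotated]) (auto simp: inj_def)
  moreover have "card ?A = label_count {r\<in>P. \<exists>c. r = v @ [c]} (\<tau> \<circ> \<sigma>) j"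
  proof -
    have image: "(\<lambda>c. v @ [c]) ` ?A = {r \<in> {r\<in>P. \<exists>c. r = v @ [c]}. (\<tau> \<circ> \<sigma>) r = j}"
      by auto
    have "inj_on (\<lambda>c. v @ [c]) ?A"
      by (simp add: inj_on_def)
    from card_image[OF this, symmetric] show ?thesis
      unfolding image label_count_def .
  qed
  moreover have "v @ [c\<^sub>0] \<notin> P"
    using spine by blast
  ultimately show "child_type_count (shuffled \<sigma>) (\<tau> \<circ> unshuffle \<sigma>) v j =
      incr_at (label_count {r\<in>P. \<exists>c. r = v @ [c]} (\<tau> \<circ> \<sigma>)) (\<tau> (v @ [c\<^sub>0])) j"
    by (cases "j = \<tau> (v @ [c\<^sub>0])") (simp_all add: child_type_count_def)
qed

lemma graft_inj: "inj_on graft (P \<rightarrow>\<^sub>E UNIV)"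
proof (rule inj_onI)
  fix h h' assume h: "h \<in> P \<rightarrow>\<^sub>E UNIV" "h' \<in> P \<rightarrow>\<^sub>E UNIV" and eq: "graft h = graft h'"
  show "h = h'"
  proof
    fix q
    show "h q = h' q"
    proof (cases "q \<in> P")
      case True
      then show ?thesis
        using eq mem_graft[OF True] by blast
    next
      case False
      then show ?thesis
        using PiE_arb[OF h(1) False] PiE_arb[OF h(2) False] by simp
    qed
  qed
qed

lemma shuffle_class_eq_image:
  "{T'. \<exists>\<sigma>. bij_betw \<sigma> P P \<and>
      T' = {w \<in> T. \<not> (\<exists>q\<in>P. \<exists>u. w = q @ u)} \<union> (\<Union>q\<in>P. (\<lambda>w. q @ w) ` subtree_at T (\<sigma> q))} =
    shuffled ` {\<sigma>. \<sigma> permutes P}"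
proof -
  have unfold: "{w \<in> T. \<not> (\<exists>q\<in>P. \<exists>u. w = q @ u)} \<union> (\<Union>q\<in>P. (\<lambda>w. q @ w) ` subtree_at T (\<sigma> q)) =
      shuffled \<sigma>" for \<sigma>
    by (simp add: shuffled_def graft_def below_def)
  show ?thesis
    unfolding unfold
  proof (intro equalityI subsetI)
    fix T' assume "T' \<in> {T'. \<exists>\<sigma>. bij_betw \<sigma> P P \<and> T' = shuffled \<sigma>}"
    then obtain \<sigma> where \<sigma>: "bij_betw \<sigma> P P" "T' = shuffled \<sigma>"
      by blast
    let ?\<sigma>' = "\<lambda>x. if x \<in> P then \<sigma> x else x"
    have "?\<sigma>' permutes P"
      using \<sigma>(1) by (intro bij_imp_permutes) (auto simp: bij_betw_cong[of P ?\<sigma>' \<sigma>])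
    moreover have "shuffled ?\<sigma>' = T'"
      using \<sigma>(2) by (auto simp: shuffled_def graft_def)
    ultimately show "T' \<in> shuffled ` {\<sigma>. \<sigma> permutes P}"
      by blast
  next
    fix T' assume "T' \<in> shuffled ` {\<sigma>. \<sigma> permutes P}"
    then show "T' \<in> {T'. \<exists>\<sigma>. bij_betw \<sigma> P P \<and> T' = shuffled \<sigma>}"
      using permutes_imp_bij by blast
  qed
qed

end

lemma dcatalan_tree_prefix: "dcatalan_tree d T \<Longrightarrow> w @ u \<in> T \<Longrightarrow> w \<in> T"
proof (induction u rule: rev_induct)
  case (snoc c u)
  then show ?case
    unfolding dcatalan_tree_def by (metis append_assoc)
qed simp

locale catalan_path =
  fixes d :: nat and T :: "nat list set" and v\<^sub>0 cs :: "nat list" and p :: nat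
  assumes catalan: "dcatalan_tree d T" and d: "d \<ge> 2"
    and length_cs: "length cs = p" and path_in_T: "v\<^sub>0 @ cs \<in> T"
begin

definition path_vertex :: "nat \<Rightarrow> nat list" where
  "path_vertex i = v\<^sub>0 @ take i cs"

definition siblings :: "nat \<Rightarrow> nat list set" where
  "siblings i = (\<lambda>c. path_vertex i @ [c]) ` {c. c < d \<and> c \<noteq> cs ! i}"

abbreviation positions :: "nat list set" where
  "positions \<equiv> sibling_positions d v\<^sub>0 cs"

lemma path_vertex_in_T: "i \<le> p \<Longrightarrow> path_vertex i \<in> T"
  using dcatalan_tree_prefix[OF catalan, of "path_vertex i" "drop i cs"] path_in_T
  by (simp add: path_vertex_def)

lemma path_vertex_Suc: "i < p \<Longrightarrow> path_vertex (Suc i) = path_vertex i @ [cs ! i]"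
  using length_cs by (simp add: path_vertex_def take_Suc_conv_app_nth)

lemma length_path_vertex: "i \<le> p \<Longrightarrow> length (path_vertex i) = length v\<^sub>0 + i"
  using length_cs by (simp add: path_vertex_def)

lemma path_vertex_eq_iff: "i \<le> p \<Longrightarrow> j \<le> p \<Longrightarrow> path_vertex i = path_vertex j \<longleftrightarrow> i = j"
  using length_path_vertex by (metis add_left_cancel)

lemma children_path_vertex:
  assumes "i < p"
  shows "cs ! i < d" "path_vertex i @ [c] \<in> T \<longleftrightarrow> c < d"
proof -
  have "path_vertex i @ [cs ! i] \<in> T"
    using path_vertex_in_T[of "Suc i"] path_vertex_Suc assms by simp
  moreover have "path_vertex i \<in> T"
    using path_vertex_in_T assms by simp
  ultimately have "\<forall>c. path_vertex i @ [c] \<in> T \<longleftrightarrow> c < d"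
    using catalan unfolding dcatalan_tree_def by blast
  then show "cs ! i < d" "path_vertex i @ [c] \<in> T \<longleftrightarrow> c < d"
    using \<open>path_vertex i @ [cs ! i] \<in> T\<close> by blast+
qed

lemma positions_eq: "positions = (\<Union>i<p. siblings i)"
  unfolding sibling_positions_def siblings_def path_vertex_def using length_cs by auto

lemma mem_positions: "r \<in> positions \<longleftrightarrow> (\<exists>i c. i < p \<and> c < d \<and> c \<noteq> cs ! i \<and> r = path_vertex i @ [c])"
  unfolding positions_eq siblings_def by auto

lemma finite_siblings: "finite (siblings i)"
  unfolding siblings_def by simp

lemma card_siblings: "i < p \<Longrightarrow> card (siblings i) = d - 1"
proof -
  assume i: "i < p"
  have "card (siblings i) = card ({..<d} - {cs ! i})"
    unfolding siblings_def by (subst card_image) (auto simp: inj_on_def intro!: arg_cong[where f = card])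
  then show ?thesis
    using children_path_vertex(1)[OF i] by simp
qed

lemma siblings_block: "i < p \<Longrightarrow> r \<in> siblings i \<Longrightarrow> length r - length v\<^sub>0 - 1 = i"
  using length_path_vertex[of i] by (auto simp: siblings_def)

lemma snoc_path_vertex_in_positions:
  assumes "i < p" "path_vertex i @ [c] \<in> positions"
  shows "c \<noteq> cs ! i"
proof -
  obtain j c' where j: "j < p" "c' \<noteq> cs ! j" "path_vertex i @ [c] = path_vertex j @ [c']"
    using assms(2) mem_positions by blast
  then have "i = j"
    using length_path_vertex[of i] length_path_vertex[of j] assms(1) by (simp add: path_vertex_def)
  then show ?thesis
    using j by simp
qed

lemma positions_prefix_free:
  assumes "q \<in> positions" "q' \<in> positions" "q = q' @ z"
  shows "z = []"
proof (rule ccontr)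
  assume "z \<noteq> []"
  obtain i c where i: "i < p" "q = path_vertex i @ [c]"
    using assms(1) mem_positions by blast
  obtain j c' where j: "j < p" "c' \<noteq> cs ! j" "q' = path_vertex j @ [c']"
    using assms(2) mem_positions by blast
  have "length q = length q' + length z"
    using assms(3) by simp
  then have "j < i"
    using \<open>z \<noteq> []\<close> i j length_path_vertex[of i] length_path_vertex[of j] by simp
  then have "take (Suc j) (take i cs @ [c]) = take j cs @ [cs ! j]"
    using i(1) length_cs by (simp add: take_Suc_conv_app_nth)
  moreover have "take (Suc j) (take i cs @ [c]) = take j cs @ [c']"
    using assms(3) i(2) j(1,3) \<open>j < i\<close> length_cs by (simp add: path_vertex_def)
  ultimately show False
    using j(2) by simp
qed

sublocale subtree_shuffle T positions
proof
  show "finite T" "[] \<in> T" "\<And>v c. v @ [c] \<in> T \<Longrightarrow> v \<in> T"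
    using catalan by (auto simp: dcatalan_tree_def)
  show "positions \<subseteq> T"
    using children_path_vertex by (auto simp: mem_positions)
  show "[] \<notin> positions"
    by (auto simp: mem_positions path_vertex_def)
qed (rule positions_prefix_free)

lemma finite_positions: "finite positions"
  using finite_subset[OF P_subset finite_T] .

lemma parents_eq: "parents = path_vertex ` {..<p}"
proof (intro equalityI subsetI)
  fix w assume "w \<in> parents"
  then obtain c where "w @ [c] \<in> positions"
    by (auto simp: parents_def)
  then show "w \<in> path_vertex ` {..<p}"
    by (auto simp: mem_positions)
next
  fix w assume "w \<in> path_vertex ` {..<p}"
  then obtain i where i: "i < p" "w = path_vertex i"
    by auto
  let ?c = "if cs ! i = 0 then 1 else 0"
  have "w @ [?c] \<in> positions"
    using d i by (auto simp: mem_positions)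
  then show "w \<in> parents"
    by (auto simp: parents_def)
qed

lemma spine_child: "i < p \<Longrightarrow> {c. path_vertex i @ [c] \<in> T \<and> path_vertex i @ [c] \<notin> positions} = {cs ! i}"
  using children_path_vertex snoc_path_vertex_in_positions by (auto simp: mem_positions path_vertex_eq_iff)

lemma positions_below_path_vertex:
  assumes "i < p"
  shows "{r\<in>positions. \<exists>c. r = path_vertex i @ [c]} = siblings i"
proof (intro equalityI subsetI)
  fix r assume "r \<in> {r\<in>positions. \<exists>c. r = path_vertex i @ [c]}"
  then obtain c where "r \<in> positions" "r = path_vertex i @ [c]"
    by blast
  moreover have "positions \<subseteq> T"
    by (rule P_subset)
  ultimately show "r \<in> siblings i"
    using snoc_path_vertex_in_positions[OF assms] children_path_vertex(2)[OF assms]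
    by (auto simp: siblings_def)
next
  fix r assume "r \<in> siblings i"
  then show "r \<in> {r\<in>positions. \<exists>c. r = path_vertex i @ [c]}"
    using assms by (auto simp: positions_eq siblings_def)
qed

definition off_spine_weight :: "('n \<Rightarrow> ('n \<Rightarrow> nat) \<Rightarrow> complex) \<Rightarrow> (nat list \<Rightarrow> 'n) \<Rightarrow> complex" where
  "off_spine_weight Hc \<tau> = (\<Prod>w\<in>internal_vertices T - parents. Hc (\<tau> w) (child_type_count T \<tau> w))"

lemma parents_weight_eq_walk_weight:
  assumes \<sigma>: "\<sigma> permutes positions"
  shows "(\<Prod>v\<in>parents. Hc (\<tau> v) (child_type_count (shuffled \<sigma>) (\<tau> \<circ> unshuffle \<sigma>) v)) =
    walk_weight Hc p siblings (\<tau> \<circ> path_vertex) (restrict (\<tau> \<circ> \<sigma>) positions)"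
proof -
  have "inj_on path_vertex {..<p}"
    by (auto simp: inj_on_def path_vertex_eq_iff)
  moreover have "child_type_count (shuffled \<sigma>) (\<tau> \<circ> unshuffle \<sigma>) (path_vertex i) =
      incr_at (label_count (siblings i) (restrict (\<tau> \<circ> \<sigma>) positions)) (\<tau> (path_vertex (Suc i)))"
    if i: "i < p" for i
  proof -
    have "siblings i \<subseteq> positions"
      using i by (auto simp: positions_eq)
    then show ?thesis
      using child_type_count_shuffled_parent[OF \<sigma> _ spine_child[OF i], of \<tau>] i
      by (simp add: parents_eq positions_below_path_vertex path_vertex_Suc label_count_restrict)
  qed
  ultimately show ?thesis
    by (simp add: parents_eq prod.reindex walk_weight_def)
qed

lemma E_weight_shuffled_eq:
  assumes "\<sigma> permutes positions"
  shows "E_weight Hc i \<alpha> (shuffled \<sigma>) = (\<Sum>\<tau>\<in>labellings T i \<alpha>.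
    off_spine_weight Hc \<tau> * walk_weight Hc p siblings (\<tau> \<circ> path_vertex) (restrict (\<tau> \<circ> \<sigma>) positions))"
  by (simp add: E_weight_shuffled[OF assms] parents_weight_eq_walk_weight[OF assms] off_spine_weight_def)

lemma sum_permutes_E_weight_shuffled:
  "(\<Sum>\<sigma>\<in>{\<sigma>. \<sigma> permutes positions}. E_weight Hc i \<alpha> (shuffled \<sigma>)) =
    (\<Sum>\<tau>\<in>labellings T i \<alpha>. off_spine_weight Hc \<tau> * (of_nat (card (stabiliser positions \<tau>)) *
      (\<Sum>h\<in>rearrangements positions \<tau>. walk_weight Hc p siblings (\<tau> \<circ> path_vertex) h)))"
proof -
  have "(\<Sum>\<sigma>\<in>{\<sigma>. \<sigma> permutes positions}. E_weight Hc i \<alpha> (shuffled \<sigma>)) =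
      (\<Sum>\<sigma>\<in>{\<sigma>. \<sigma> permutes positions}. \<Sum>\<tau>\<in>labellings T i \<alpha>.
        off_spine_weight Hc \<tau> * walk_weight Hc p siblings (\<tau> \<circ> path_vertex) (restrict (\<tau> \<circ> \<sigma>) positions))"
    by (intro sum.cong refl) (simp add: E_weight_shuffled_eq)
  also have "\<dots> = (\<Sum>\<tau>\<in>labellings T i \<alpha>. off_spine_weight Hc \<tau> *
      (\<Sum>\<sigma>\<in>{\<sigma>. \<sigma> permutes positions}. walk_weight Hc p siblings (\<tau> \<circ> path_vertex) (restrict (\<tau> \<circ> \<sigma>) positions)))"
    unfolding sum_distrib_left by (rule sum.swap)
  also have "\<dots> = (\<Sum>\<tau>\<in>labellings T i \<alpha>. off_spine_weight Hc \<tau> * (of_nat (card (stabiliser positions \<tau>)) *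
      (\<Sum>h\<in>rearrangements positions \<tau>. walk_weight Hc p siblings (\<tau> \<circ> path_vertex) h)))"
  proof (intro sum.cong refl)
    fix \<tau>
    show "off_spine_weight Hc \<tau> * (\<Sum>\<sigma>\<in>{\<sigma>. \<sigma> permutes positions}.
          walk_weight Hc p siblings (\<tau> \<circ> path_vertex) (restrict (\<tau> \<circ> \<sigma>) positions)) =
        off_spine_weight Hc \<tau> * (of_nat (card (stabiliser positions \<tau>)) *
          (\<Sum>h\<in>rearrangements positions \<tau>. walk_weight Hc p siblings (\<tau> \<circ> path_vertex) h))"
      using sum_permutes_eq_card_stabiliser[OF finite_positions,
          where F = "walk_weight Hc p siblings (\<tau> \<circ> path_vertex)" and g = \<tau>]
      by simp
  qed
  finally show ?thesis .
qed

definition spine_interior :: "nat list set" where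
  "spine_interior = path_vertex ` {0<..<p}"

lemma spine_interior_subset_parents: "spine_interior \<subseteq> parents"
  by (auto simp: spine_interior_def parents_eq)

lemma path_vertex_in_spine_interior_iff: "n \<le> p \<Longrightarrow> path_vertex n \<in> spine_interior \<longleftrightarrow> 0 < n \<and> n < p"
  by (auto simp: spine_interior_def path_vertex_eq_iff)

lemma spine_interiorE:
  assumes "w \<in> spine_interior"
  obtains n where "0 < n" "n < p" "w = path_vertex n" "length w - length v\<^sub>0 = n"
  using assms length_path_vertex by (auto simp: spine_interior_def)

lemma root_notin_spine_interior: "[] \<notin> spine_interior"
  by (auto elim: spine_interiorE simp: path_vertex_def length_cs)

lemma spine_interior_notin_leaves: "w \<in> spine_interior \<Longrightarrow> w \<notin> leaves T"
  using spine_interior_subset_parents parents_subset_internal by (auto simp: leaves_def internal_vertices_def)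

lemma spine_interior_notin_positions: "w \<in> spine_interior \<Longrightarrow> w \<notin> positions"
  using spine_interior_subset_parents parent_not_below below_append[of w "[]"] by auto

lemma snoc_notin_spine_interior: "w \<notin> parents \<Longrightarrow> w @ [c] \<notin> spine_interior"
  by (auto elim!: spine_interiorE simp: gr0_conv_Suc path_vertex_Suc parents_eq)

definition respine :: "(nat list \<Rightarrow> 'n) \<Rightarrow> (nat \<Rightarrow> 'n) \<Rightarrow> nat list \<Rightarrow> 'n" where
  "respine \<tau> u w = (if w \<in> spine_interior then u (length w - length v\<^sub>0) else \<tau> w)"

lemma respine_path_vertex:
  assumes "n \<le> p" "u \<in> walks p (\<tau> (path_vertex 0)) (\<tau> (path_vertex p))"
  shows "respine \<tau> u (path_vertex n) = u n"
proof (cases "path_vertex n \<in> spine_interior")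
  case True
  then show ?thesis
    using length_path_vertex[OF assms(1)] by (simp add: respine_def)
next
  case False
  then have "n = 0 \<or> n = p"
    using path_vertex_in_spine_interior_iff[OF assms(1)] assms(1) by auto
  then show ?thesis
    using False assms(2) by (auto simp: respine_def walks_def)
qed

lemma off_spine_weight_cong:
  assumes "\<And>w. w \<notin> spine_interior \<Longrightarrow> \<tau> w = \<tau>' w"
  shows "off_spine_weight Hc \<tau> = off_spine_weight Hc \<tau>'"
  unfolding off_spine_weight_def
proof (intro prod.cong refl)
  fix w assume "w \<in> internal_vertices T - parents"
  then have "w \<notin> spine_interior" "\<And>c. w @ [c] \<notin> spine_interior"
    using spine_interior_subset_parents snoc_notin_spine_interior by auto
  then show "Hc (\<tau> w) (child_type_count T \<tau> w) = Hc (\<tau>' w) (child_type_count T \<tau>' w)"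
    using assms by (simp add: child_type_count_def)
qed

text \<open>The value i given to the interior of the path is only a normalisation.\<close>

lemma sum_labellings_split_spine_interior:
  "(\<Sum>\<tau>\<in>labellings T i \<alpha>. F \<tau>) =
    (\<Sum>(\<tau>, u)\<in>Sigma {\<tau>\<in>labellings T i \<alpha>. \<forall>w\<in>spine_interior. \<tau> w = i} (\<lambda>\<tau>. walks p (\<tau> (path_vertex 0)) (\<tau> (path_vertex p))).
      F (respine \<tau> u))"
proof -
  let ?S = "Sigma {\<tau>\<in>labellings T i \<alpha>. \<forall>w\<in>spine_interior. \<tau> w = i} (\<lambda>\<tau>. walks p (\<tau> (path_vertex 0)) (\<tau> (path_vertex p)))"
  let ?j = "\<lambda>a. respine (fst a) (snd a)"
  let ?i = "\<lambda>\<tau>. (\<lambda>w. if w \<in> spine_interior then i else \<tau> w, restrict (\<tau> \<circ> path_vertex) {..p})"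
  have ends: "path_vertex 0 \<notin> spine_interior" "path_vertex p \<notin> spine_interior"
    by (simp_all add: path_vertex_in_spine_interior_iff)
  have spine_interior_subset_T: "spine_interior \<subseteq> T"
    using spine_interior_subset_parents parents_subset_internal by (auto simp: internal_vertices_def)
  have labelling_iff: "\<tau> \<in> labellings T i \<alpha> \<longleftrightarrow> \<tau>' \<in> labellings T i \<alpha>"
    if "\<tau> \<in> T \<rightarrow>\<^sub>E UNIV" "\<tau>' \<in> T \<rightarrow>\<^sub>E UNIV" "\<And>w. w \<notin> spine_interior \<Longrightarrow> \<tau> w = \<tau>' w" for \<tau> \<tau>'
    using that root_notin_spine_interior spine_interior_notin_leaves
    by (auto simp: labellings_def intro!: is_labelling_cong)
  show ?thesis
  proof (rule sum.reindex_bij_witness[symmetric, where S = ?S and i = ?i and j = ?j])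
    fix a assume "a \<in> ?S"
    then obtain \<tau> u where a: "a = (\<tau>, u)" and \<tau>: "\<tau> \<in> labellings T i \<alpha>" "\<forall>w\<in>spine_interior. \<tau> w = i"
      and u: "u \<in> walks p (\<tau> (path_vertex 0)) (\<tau> (path_vertex p))"
      by auto
    have "(\<lambda>w. if w \<in> spine_interior then i else respine \<tau> u w) = \<tau>"
      using \<tau>(2) by (auto simp: respine_def)
    moreover have "restrict (respine \<tau> u \<circ> path_vertex) {..p} = u"
    proof
      fix n
      have "u \<in> {..p} \<rightarrow>\<^sub>E UNIV"
        using u by (simp add: walks_def)
      then show "restrict (respine \<tau> u \<circ> path_vertex) {..p} n = u n"
        using respine_path_vertex[OF _ u, of n] PiE_arb[of u "{..p}" _ n] by (cases "n \<le> p") simp_all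
    qed
    ultimately show "?i (?j a) = a"
      unfolding a by (simp only: prod.inject fst_conv snd_conv)
    have "respine \<tau> u \<in> T \<rightarrow>\<^sub>E UNIV"
      using \<tau>(1) spine_interior_subset_T by (auto simp: respine_def labellings_def PiE_iff extensional_def)
    then show "?j a \<in> labellings T i \<alpha>"
      unfolding a using labelling_iff[of _ \<tau>] \<tau>(1) by (auto simp: respine_def labellings_def)
    show "F (?j a) = (\<lambda>(\<tau>, u). F (respine \<tau> u)) a"
      unfolding a by simp
  next
    fix \<tau> assume \<tau>: "\<tau> \<in> labellings T i \<alpha>"
    then have "\<tau> \<in> T \<rightarrow>\<^sub>E UNIV"
      by (simp add: labellings_def)
    show "?j (?i \<tau>) = \<tau>"
    proof
      fix w
      show "?j (?i \<tau>) w = \<tau> w"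
      proof (cases "w \<in> spine_interior")
        case True
        then obtain n where "n < p" "w = path_vertex n" "length w - length v\<^sub>0 = n"
          by (auto elim: spine_interiorE)
        with True show ?thesis
          by (simp add: respine_def)
      qed (simp add: respine_def)
    qed
    have "(\<lambda>w. if w \<in> spine_interior then i else \<tau> w) \<in> T \<rightarrow>\<^sub>E UNIV"
      using \<open>\<tau> \<in> T \<rightarrow>\<^sub>E UNIV\<close> spine_interior_subset_T by (auto simp: PiE_iff extensional_def)
    then have "(\<lambda>w. if w \<in> spine_interior then i else \<tau> w) \<in> labellings T i \<alpha>"
      using labelling_iff[OF _ \<open>\<tau> \<in> T \<rightarrow>\<^sub>E UNIV\<close>] \<tau> by simp
    then show "?i \<tau> \<in> ?S"
      using ends by (auto simp: walks_def)
  qed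
qed

lemma sum_labellings_walk_weights_eq_0:
  assumes nilpotent: "\<forall>x. matpow (jacobian d Hc x) p = 0"
  shows "(\<Sum>\<tau>\<in>labellings T i \<alpha>. off_spine_weight Hc \<tau> * (of_nat (card (stabiliser positions \<tau>)) *
      (\<Sum>h\<in>rearrangements positions \<tau>. walk_weight Hc p siblings (\<tau> \<circ> path_vertex) h))) = 0"
proof -
  let ?Z = "{\<tau>\<in>labellings T i \<alpha>. \<forall>w\<in>spine_interior. \<tau> w = i}"
  let ?walks = "\<lambda>\<tau>. walks p (\<tau> (path_vertex 0)) (\<tau> (path_vertex p))"
  let ?F = "\<lambda>\<tau> u. off_spine_weight Hc \<tau> * (of_nat (card (stabiliser positions \<tau>)) *
      (\<Sum>h\<in>rearrangements positions \<tau>. walk_weight Hc p siblings u h))"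
  have respine_eq: "respine \<tau> u w = \<tau> w" if "w \<notin> spine_interior" for \<tau> u w
    using that by (simp add: respine_def)
  have "?F (respine \<tau> u) (respine \<tau> u \<circ> path_vertex) = ?F \<tau> u" if "u \<in> ?walks \<tau>" for \<tau> u
  proof -
    have "r \<in> positions \<Longrightarrow> respine \<tau> u r = \<tau> r" for r
      using spine_interior_notin_positions respine_eq by blast
    moreover have "walk_weight Hc p siblings (respine \<tau> u \<circ> path_vertex) h = walk_weight Hc p siblings u h" for h
      using respine_path_vertex[OF _ that] by (intro walk_weight_cong) simp
    moreover have "off_spine_weight Hc (respine \<tau> u) = off_spine_weight Hc \<tau>"
      by (rule off_spine_weight_cong) (rule respine_eq)
    ultimately show ?thesis
      by (simp add: stabiliser_cong[of positions "respine \<tau> u" \<tau>] rearrangements_cong[of positions "respine \<tau> u" \<tau>])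
  qed
  then have "(\<Sum>\<tau>\<in>labellings T i \<alpha>. ?F \<tau> (\<tau> \<circ> path_vertex)) = (\<Sum>(\<tau>, u)\<in>Sigma ?Z ?walks. ?F \<tau> u)"
    unfolding sum_labellings_split_spine_interior by (intro sum.cong refl) auto
  also have "\<dots> = (\<Sum>\<tau>\<in>?Z. \<Sum>u\<in>?walks \<tau>. ?F \<tau> u)"
    by (rule sum.Sigma[symmetric]) (auto intro: finite_subset[OF _ finite_labellings[OF finite_T]] finite_walks)
  also have "\<dots> = (\<Sum>\<tau>\<in>?Z. off_spine_weight Hc \<tau> * (of_nat (card (stabiliser positions \<tau>)) *
      (\<Sum>h\<in>rearrangements positions \<tau>. \<Sum>u\<in>?walks \<tau>. walk_weight Hc p siblings u h)))"
  proof (intro sum.cong refl)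
    fix \<tau>
    show "(\<Sum>u\<in>?walks \<tau>. ?F \<tau> u) = off_spine_weight Hc \<tau> * (of_nat (card (stabiliser positions \<tau>)) *
        (\<Sum>h\<in>rearrangements positions \<tau>. \<Sum>u\<in>?walks \<tau>. walk_weight Hc p siblings u h))"
      by (simp add: sum_distrib_left sum.swap[of _ "?walks \<tau>"])
  qed
  also have "\<dots> = 0"
  proof (intro sum.neutral ballI)
    fix \<tau>
    have "(\<Sum>h\<in>rearrangements (\<Union>i<p. siblings i) \<tau>. \<Sum>u\<in>?walks \<tau>. walk_weight Hc p siblings u h) = 0"
      using d nilpotent finite_siblings card_siblings siblings_block
      by (intro sum_rearrangements_walk_weights_eq_0[where block = "\<lambda>r. length r - length v\<^sub>0 - 1"]) auto
    then show "off_spine_weight Hc \<tau> * (of_nat (card (stabiliser positions \<tau>)) *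
        (\<Sum>h\<in>rearrangements positions \<tau>. \<Sum>u\<in>?walks \<tau>. walk_weight Hc p siblings u h)) = 0"
      by (simp add: positions_eq)
  qed
  finally show ?thesis .
qed

lemma sum_shuffle_class_E_weight_eq_0:
  assumes nilpotent: "\<forall>x. matpow (jacobian d Hc x) p = 0"
  shows "(\<Sum>T'\<in>shuffle_class d T v\<^sub>0 cs. E_weight Hc i \<alpha> T') = 0"
proof -
  let ?s = "subtree_at T"
  let ?assignment = "\<lambda>\<sigma>. restrict (?s \<circ> \<sigma>) positions"
  have shuffled_eq: "shuffled \<sigma> = graft (?assignment \<sigma>)" for \<sigma>
    by (simp add: shuffled_def graft_def)
  have "shuffle_class d T v\<^sub>0 cs = graft ` ?assignment ` {\<sigma>. \<sigma> permutes positions}"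
    unfolding shuffle_class_def Let_def shuffle_class_eq_image shuffled_eq image_image ..
  also have "\<dots> = graft ` rearrangements positions ?s"
    by (simp add: rearrangements_eq_image_permutes[OF finite_positions])
  finally have class_eq: "shuffle_class d T v\<^sub>0 cs = graft ` rearrangements positions ?s" .
  have "inj_on graft (rearrangements positions ?s)"
    using graft_inj by (rule inj_on_subset) (auto simp: rearrangements_def)
  then have "(\<Sum>T'\<in>shuffle_class d T v\<^sub>0 cs. E_weight Hc i \<alpha> T') =
      (\<Sum>h\<in>rearrangements positions ?s. E_weight Hc i \<alpha> (graft h))"
    by (simp add: class_eq sum.reindex)
  moreover have "of_nat (card (stabiliser positions ?s)) * (\<Sum>h\<in>rearrangements positions ?s. E_weight Hc i \<alpha> (graft h)) =
      (\<Sum>\<sigma>\<in>{\<sigma>. \<sigma> permutes positions}. E_weight Hc i \<alpha> (shuffled \<sigma>))"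
    unfolding shuffled_eq
    by (rule sum_permutes_eq_card_stabiliser[OF finite_positions, where F = "\<lambda>h. E_weight Hc i \<alpha> (graft h)", symmetric])
  moreover have "(\<Sum>\<sigma>\<in>{\<sigma>. \<sigma> permutes positions}. E_weight Hc i \<alpha> (shuffled \<sigma>)) = 0"
    by (simp add: sum_permutes_E_weight_shuffled sum_labellings_walk_weights_eq_0[OF nilpotent])
  moreover have "card (stabiliser positions ?s) > 0"
    by (rule card_stabiliser_pos[OF finite_positions])
  ultimately show ?thesis
    by simp
qed

end

theorem lemma3p3:
  fixes Hc :: "'n::finite \<Rightarrow> ('n \<Rightarrow> nat) \<Rightarrow> complex"
    and d p :: nat
  assumes "d \<ge> 2"
    and "1 \<le> p" and "p \<le> CARD('n)"
    and "\<forall>x. matpow (jacobian d Hc x) p = 0"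
  shows "\<forall>k \<ge> 1. \<forall>(i::'n) (\<alpha>::'n \<Rightarrow> nat) S.
           sum \<alpha> UNIV = (d - 1) * k + 1 \<longrightarrow> is_shuffle_class d k p S \<longrightarrow>
           (\<Sum>T\<in>S. E_weight Hc i \<alpha> T) = 0"
proof (intro allI impI)
  fix k i \<alpha> S
  assume "is_shuffle_class d k p S"
  then obtain T v\<^sub>0 cs where T: "T \<in> catalan_set d k" "length cs = p" "v\<^sub>0 @ cs \<in> T"
    and S: "S = shuffle_class d T v\<^sub>0 cs"
    unfolding is_shuffle_class_def by blast
  interpret catalan_path d T v\<^sub>0 cs p
    using T assms(1) by unfold_locales (simp_all add: catalan_set_def)
  show "(\<Sum>T\<in>S. E_weight Hc i \<alpha> T) = 0"
    unfolding S by (rule sum_shuffle_class_E_weight_eq_0[OF assms(4)])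
qed

end
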